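(* Suppose that for some $C<\infty$ and $q>2$, $(\mathbb{E}[|Y(z)|^q])^{1/q}\le C$ and $\mathbb{E}[Y(z)^2\mid X=x]\le C$ for $z=0,1$ and all $x\in\mathcal{X}$. Let the observations $\{W_{ti}\}$ come from a non-adaptive batch experiment with batch propensities $e_1,\dots,e_T\in\mathcal{F}_\gamma$ for some $\gamma>0$, and let $e_{0,N}=\sum_t\frac{N_t}{N}e_t$, $e_0=\sum_t\kappa_te_t$. Define the AIPW score, for $\nu=(m(0,\cdot),m(1,\cdot))$, $$s_{\mathrm{AIPW}}(W;\theta,\nu,e)=m(1,X)-m(0,X)+\frac{Z(Y-m(1,X))}{e(X)}-\frac{(1-Z)(Y-m(0,X))}{1-e(X)}-\theta,$$ and write $s_{\mathrm{AIPW},b}=s_{\mathrm{AIPW}}+\theta$. Let $\nu_0=(m_0(0,\cdot),m_0(1,\cdot))$, $\theta_{0,\mathrm{ATE}}=\mathbb{E}[Y(1)-Y(0)]$, and $$\hat\theta^*_{\mathrm{AIPW}}=\frac1N\sum_{t=1}^T\sum_{i=1}^{N_t}s_{\mathrm{AIPW},b}(W_{ti};\nu_0,e_{0,N}).$$ Then $\sqrt N(\hat\theta^*_{\mathrm{AIPW}}-\theta_{0,\mathrm{ATE}})\xrightarrow{d}\mathcal{N}(0,V_{0,\mathrm{AIPW}})$ where $$V_{0,\mathrm{AIPW}}=\mathbb{E}\Big[\frac{v_0(1,X)}{e_0(X)}+\frac{v_0(0,X)}{1-e_0(X)}+\big(m_0(1,X)-m_0(0,X)-\theta_{0,\mathr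m{ATE}}\big)^2\Big].$$
   Context: Setting: $T\ge2$ batches, batch $t$ has $N_t$ subjects, $N=\sum_tN_t\to\infty$ with $N_t/N\to\kappa_t\in(0,1)$. The vectors $(X_{ti},Y_{ti}(0),Y_{ti}(1))$, $X_{ti}\in\mathcal{X}\subseteq\mathbb{R}^d$, are i.i.d. over all $t,i$ from a distribution $P^S$; expectations without subscript are under $P^S$. Observed data $W_{ti}=(X_{ti},Z_{ti},Y_{ti})$ with $Y_{ti}=Z_{ti}Y_{ti}(1)+(1-Z_{ti})Y_{ti}(0)$. $m_0(z,x)=\mathbb{E}[Y(z)\mid X=x]$, $v_0(z,x)=\mathrm{Var}(Y(z)\mid X=x)$. $\mathcal{F}_\gamma$ is the set of measurable functions $\mathcal{X}\to[\gamma,1-\gamma]$. A non-adaptive batch experiment with nonrandom propensities $e_1,\dots,e_T$ assigns $Z_{ti}=\mathbf{1}(U_{ti}\le e_t(X_{ti}))$ with $U_{ti}$ i.i.d. Uniform$(0,1)$ independent of all $(X_{ti},Y_{ti}(0),Y_{ti}(1))$. *)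

theory Defs
  imports "HOL-Probability.Probability"
begin

text \<open>A unit's full (latent) data: covariate X, potential outcomes Y(0), Y(1).\<close>

definition Xof :: "('x \<times> real \<times> real) \<Rightarrow> 'x" where
  "Xof w = fst w"

definition Ypot :: "nat \<Rightarrow> ('x \<times> real \<times> real) \<Rightarrow> real" where
  "Ypot z w = (if z = 1 then snd (snd w) else fst (snd w))"

definition cond_exp_version ::
  "'a measure \<Rightarrow> ('a \<Rightarrow> 'b::topological_space) \<Rightarrow> ('a \<Rightarrow> real) \<Rightarrow> ('b \<Rightarrow> real) \<Rightarrow> bool" where
  "cond_exp_version M X f g \<longleftrightarrow>
     g \<in> borel_measurable borel \<and> integrable M f \<and> integrable M (\<lambda>\<omega>. g (X \<omega>)) \<and>
     (\<forall>A \<in> sets borel. (\<integral>\<omega>. indicator A (X \<omega>) * f \<omega> \<partial>M) = (\<integral>\<omega>. indicator A (X \<omega>) * g (X \<omega>) \<partial>M))"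

definition normal_measure :: "real \<Rightarrow> real \<Rightarrow> real measure" where
  "normal_measure mu var =
     (if var = 0 then return borel mu else density lborel (normal_density mu (sqrt var)))"

text \<open>Distribution of one unit in the experiment: (X, Y(0), Y(1)) ~ P and an independent U ~ Uniform(0,1).\<close>
definition unit_measure :: "('x::topological_space \<times> real \<times> real) measure \<Rightarrow> (('x \<times> real \<times> real) \<times> real) measure" where
  "unit_measure P = P \<Otimes>\<^sub>M uniform_measure lborel {0..1}"

definition batch_index :: "nat \<Rightarrow> (nat \<Rightarrow> nat) \<Rightarrow> (nat \<times> nat) set" where
  "batch_index T Nt = {(t, i). t < T \<and> i < Nt t}"

definition Zobs :: "('x \<Rightarrow> real) \<Rightarrow> (('x \<times> real \<times> real) \<times> real) \<Rightarrow> real" where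
  "Zobs e u = (if snd u \<le> e (Xof (fst u)) then 1 else 0)"

definition Yobs :: "('x \<Rightarrow> real) \<Rightarrow> (('x \<times> real \<times> real) \<times> real) \<Rightarrow> real" where
  "Yobs e u = Zobs e u * Ypot 1 (fst u) + (1 - Zobs e u) * Ypot 0 (fst u)"

definition s_aipw_b :: "(nat \<Rightarrow> 'x \<Rightarrow> real) \<Rightarrow> ('x \<Rightarrow> real) \<Rightarrow> 'x \<Rightarrow> real \<Rightarrow> real \<Rightarrow> real" where
  "s_aipw_b m e x zz y =
     m 1 x - m 0 x + zz * (y - m 1 x) / e x - (1 - zz) * (y - m 0 x) / (1 - e x)"

end

(* Integrating out the uniform assignment variable, the AIPW score of a unit of batch t,
   centred at the ATE and evaluated at a propensity e, has mean zero, because the residuals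
   Y(z) - m0(z, X) are conditionally centred given X, and second moment
   E[(m0(1,X) - m0(0,X) - ATE)^2 + e_t v0(1,X) / e^2 + (1 - e_t) v0(0,X) / (1 - e)^2].
   Averaging over the batches with the weights N_t / N and taking e = e_{0,N} = sum_t (N_t/N) e_t
   cancels one factor e (resp. 1 - e), so the average variance is exactly V_0 with e_{0,N} in
   place of e_0; it converges to V_0 by dominated convergence.  Overlap bounds all scores by
   one square-integrable envelope, which makes the Lindeberg condition automatic, and a
   central limit theorem for triangular arrays of independent variables, proved with
   characteristic functions, yields the normal limit. *)

theory Submission
  imports Defs
begin

section \<open>Square-integrable functions\<close>

lemma abs_le_imp_power2_le: "\<bar>a\<bar> \<le> b \<Longrightarrow> a\<^sup>2 \<le> (b::real)\<^sup>2"
  by (metis abs_ge_zero abs_le_square_iff abs_of_nonneg order_trans)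

lemma integrable_mult_square_integrable:
  fixes f g :: "'a \<Rightarrow> real"
  assumes "f \<in> borel_measurable M" "g \<in> borel_measurable M"
    and "integrable M (\<lambda>x. (f x)\<^sup>2)" "integrable M (\<lambda>x. (g x)\<^sup>2)"
  shows "integrable M (\<lambda>x. f x * g x)"
proof (rule Bochner_Integration.integrable_bound[where f="\<lambda>x. (f x)\<^sup>2 + (g x)\<^sup>2"])
  show "AE x in M. norm (f x * g x) \<le> norm ((f x)\<^sup>2 + (g x)\<^sup>2)"
  proof (rule AE_I2)
    fix x
    have "2 * (\<bar>f x\<bar> * \<bar>g x\<bar>) \<le> (f x)\<^sup>2 + (g x)\<^sup>2"
      using sum_squares_bound[of "\<bar>f x\<bar>" "\<bar>g x\<bar>"] by (simp add: mult.assoc)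
    moreover have "0 \<le> \<bar>f x\<bar> * \<bar>g x\<bar>" by simp
    ultimately have "\<bar>f x\<bar> * \<bar>g x\<bar> \<le> (f x)\<^sup>2 + (g x)\<^sup>2" by linarith
    then show "norm (f x * g x) \<le> norm ((f x)\<^sup>2 + (g x)\<^sup>2)" by (simp add: abs_mult)
  qed
qed (use assms in auto)

lemma square_integrable_add:
  fixes f g :: "'a \<Rightarrow> real"
  assumes "f \<in> borel_measurable M" "g \<in> borel_measurable M"
    and "integrable M (\<lambda>x. (f x)\<^sup>2)" "integrable M (\<lambda>x. (g x)\<^sup>2)"
  shows "integrable M (\<lambda>x. (f x + g x)\<^sup>2)"
proof -
  have "integrable M (\<lambda>x. (f x)\<^sup>2 + (g x)\<^sup>2 + 2 * (f x * g x))"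
    using integrable_mult_square_integrable[OF assms] assms(3,4) by auto
  then show ?thesis by (simp add: power2_sum mult.assoc)
qed

lemma square_integrable_dominated:
  fixes f G :: "'a \<Rightarrow> real"
  assumes "f \<in> borel_measurable M" "integrable M (\<lambda>x. (G x)\<^sup>2)" "AE x in M. \<bar>f x\<bar> \<le> G x"
  shows "integrable M (\<lambda>x. (f x)\<^sup>2)"
  using assms(2)
proof (rule Bochner_Integration.integrable_bound)
  show "AE x in M. norm ((f x)\<^sup>2) \<le> norm ((G x)\<^sup>2)"
    using assms(3) by eventually_elim (simp add: abs_le_imp_power2_le)
qed (use assms(1) in simp)

lemma integrable_bounded_mult:
  fixes f k :: "'a \<Rightarrow> real"
  assumes "integrable M f" "k \<in> borel_measurable M" "AE x in M. \<bar>k x\<bar> \<le> K"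
  shows "integrable M (\<lambda>x. k x * f x)"
  using integrable_mult_right[OF assms(1), of K]
proof (rule Bochner_Integration.integrable_bound)
  show "AE x in M. norm (k x * f x) \<le> norm (K * f x)"
    using assms(3) by eventually_elim (auto simp: abs_mult intro: mult_right_mono)
qed (use assms in auto)

lemma (in finite_measure) square_integrable_of_integrable_powr:
  fixes Y :: "'a \<Rightarrow> real"
  assumes "2 \<le> q" "Y \<in> borel_measurable M" "integrable M (\<lambda>w. \<bar>Y w\<bar> powr q)"
  shows "integrable M (\<lambda>w. (Y w)\<^sup>2)"
proof (rule Bochner_Integration.integrable_bound[where f="\<lambda>w. 1 + \<bar>Y w\<bar> powr q"])
  have "y\<^sup>2 \<le> 1 + \<bar>y\<bar> powr q" for y :: real
  proof (cases "\<bar>y\<bar> \<le> 1")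
    case True
    then have "y\<^sup>2 \<le> 1" by (simp add: abs_le_square_iff[of y 1, simplified])
    then show ?thesis by (smt (verit) powr_ge_zero)
  next
    case False
    then have "y\<^sup>2 = \<bar>y\<bar> powr 2" by (simp add: powr_realpow[symmetric])
    also have "\<dots> \<le> \<bar>y\<bar> powr q" using False assms(1) by (intro powr_mono) auto
    finally show ?thesis by simp
  qed
  then show "AE w in M. norm ((Y w)\<^sup>2) \<le> norm (1 + \<bar>Y w\<bar> powr q)" by simp
qed (use assms in auto)

section \<open>A central limit theorem for dominated triangular arrays\<close>

lemma abs_exp_neg_minus_linear_le:
  fixes x :: real assumes "0 \<le> x"
  shows "\<bar>exp (- x) - (1 - x)\<bar> \<le> x\<^sup>2"
proof -
  have "1 - x \<le> exp (- x)" using exp_ge_add_one_self[of "- x"] by simp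
  moreover have "exp (- x) \<le> 1 - x + x\<^sup>2"
  proof -
    have "0 \<le> (x - 1/2)\<^sup>2" by simp
    then have pos: "0 \<le> 1 - x + x\<^sup>2" by (simp add: power2_eq_square algebra_simps)
    have "1 \<le> 1 + (x\<^sup>2 + x ^ 3 + x ^ 4) / 2" using assms by simp
    also have "\<dots> = (1 - x + x\<^sup>2) * (1 + x + x\<^sup>2 / 2)"
      by (simp add: field_simps power2_eq_square power3_eq_cube power4_eq_xxxx)
    also have "\<dots> \<le> (1 - x + x\<^sup>2) * exp x"
      by (rule mult_left_mono[OF exp_lower_Taylor_quadratic[OF assms] pos])
    finally show ?thesis by (simp add: exp_minus field_simps)
  qed
  ultimately show ?thesis by simp
qed

lemma real_distribution_normal_measure: "0 \<le> V \<Longrightarrow> real_distribution (normal_measure \<mu> V)"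
  unfolding normal_measure_def real_distribution_def real_distribution_axioms_def
  by (auto simp: prob_space_return prob_space_normal_density)

lemma char_normal_measure:
  assumes "0 \<le> V"
  shows "char (normal_measure 0 V) s = of_real (exp (- (s\<^sup>2 * V / 2)))"
proof (cases "V = 0")
  case True
  then show ?thesis by (simp add: normal_measure_def char_def integral_return)
next
  case False
  define \<sigma> where "\<sigma> = sqrt V"
  have \<sigma>: "0 < \<sigma>" using assms False by (simp add: \<sigma>_def)
  interpret std: prob_space std_normal_distribution by (rule prob_space_normal_density) simp
  have "distributed std_normal_distribution lborel (\<lambda>x. x) std_normal_density"
    by (simp add: distributed_def distr_id2)
  from std.normal_density_affine[OF this _ , of \<sigma> 0] \<sigma>
  have "density lborel (normal_density 0 \<sigma>) = distr std_normal_distribution lborel (\<lambda>x. \<sigma> * x)"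
    by (simp add: distributed_def)
  then have "char (normal_measure 0 V) s = char std_normal_distribution (s * \<sigma>)"
    using False by (simp add: normal_measure_def \<sigma>_def char_def integral_distr mult.assoc)
  also have "\<dots> = exp (- (s\<^sup>2 * V / 2))"
    using assms by (simp add: char_std_normal_distribution \<sigma>_def power_mult_distrib)
  finally show ?thesis .
qed

lemma char_distr_sum_PiM:
  fixes U :: "'a measure" and h :: "'j \<Rightarrow> 'a \<Rightarrow> real"
  assumes U: "prob_space U" and I: "finite I" and h: "\<And>j. j \<in> I \<Longrightarrow> h j \<in> borel_measurable U"
  shows "char (distr (PiM I (\<lambda>_. U)) borel (\<lambda>\<omega>. (\<Sum>j\<in>I. h j (\<omega> j)) / c)) s
       = (\<Prod>j\<in>I. char (distr U borel (h j)) (s / c))"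
proof -
  interpret product_prob_space "\<lambda>_. U" I
    using U by (simp add: product_prob_space_def product_prob_space_axioms_def
        product_sigma_finite_def prob_space_imp_sigma_finite)
  have h_comp: "(\<lambda>\<omega>. h j (\<omega> j)) \<in> borel_measurable (PiM I (\<lambda>_. U))" if "j \<in> I" for j
    using measurable_compose[OF measurable_component_singleton[OF that] h[OF that]] .
  have iexp_sum: "iexp (s * ((\<Sum>j\<in>I. h j (\<omega> j)) / c)) = (\<Prod>j\<in>I. iexp (s / c * h j (\<omega> j)))" for \<omega>
    by (simp add: exp_sum[OF I, symmetric] sum_distrib_left sum_divide_distrib)
  have "char (distr (PiM I (\<lambda>_. U)) borel (\<lambda>\<omega>. (\<Sum>j\<in>I. h j (\<omega> j)) / c)) s
      = (\<integral>\<omega>. (\<Prod>j\<in>I. iexp (s / c * h j (\<omega> j))) \<partial>PiM I (\<lambda>_. U))"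
    unfolding char_def iexp_sum[symmetric] using h_comp by (subst integral_distr) auto
  also have "\<dots> = (\<Prod>j\<in>I. \<integral>x. iexp (s / c * h j x) \<partial>U)"
  proof (rule product_integral_prod[OF I])
    show "integrable U (\<lambda>x. iexp (s / c * h j x))" if "j \<in> I" for j
      using h[OF that] by (intro prob_space.integrable_iexp[OF U]) auto
  qed
  also have "\<dots> = (\<Prod>j\<in>I. char (distr U borel (h j)) (s / c))"
    unfolding char_def using h by (intro prod.cong refl) (simp add: integral_distr)
  finally show ?thesis .
qed

lemma integrable_min_square_cube:
  fixes h :: "'a \<Rightarrow> real"
  assumes "h \<in> borel_measurable M" "integrable M (\<lambda>x. (h x)\<^sup>2)"
  shows "integrable M (\<lambda>x. min (6 * (h x)\<^sup>2) (\<bar>t\<bar> * \<bar>h x\<bar> ^ 3))"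
  by (rule Bochner_Integration.integrable_bound[where f="\<lambda>x. 6 * (h x)\<^sup>2"]) (use assms in auto)

lemma (in prob_space) char_approx_dominated:
  fixes f G :: "'a \<Rightarrow> real"
  assumes f: "f \<in> borel_measurable M" and G: "G \<in> borel_measurable M" "integrable M (\<lambda>x. (G x)\<^sup>2)"
    and fG: "AE x in M. \<bar>f x\<bar> \<le> G x" and mean0: "expectation f = 0"
  shows "cmod (char (distr M borel f) t - of_real (1 - t\<^sup>2 * expectation (\<lambda>x. (f x)\<^sup>2) / 2))
    \<le> t\<^sup>2 / 6 * expectation (\<lambda>x. min (6 * (G x)\<^sup>2) (\<bar>t\<bar> * \<bar>G x\<bar> ^ 3))"
proof -
  have f2: "integrable M (\<lambda>x. (f x)\<^sup>2)" by (rule square_integrable_dominated[OF f G(2) fG])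
  have "cmod (char (distr M borel f) t - of_real (1 - t\<^sup>2 * expectation (\<lambda>x. (f x)\<^sup>2) / 2))
      \<le> t\<^sup>2 / 6 * expectation (\<lambda>x. min (6 * (f x)\<^sup>2) (\<bar>t\<bar> * \<bar>f x\<bar> ^ 3))"
    by (rule char_approx3'[OF f square_integrable_imp_integrable[OF f f2] f2 mean0]) (simp_all add: mean0)
  also have "\<dots> \<le> t\<^sup>2 / 6 * expectation (\<lambda>x. min (6 * (G x)\<^sup>2) (\<bar>t\<bar> * \<bar>G x\<bar> ^ 3))"
  proof (intro mult_left_mono integral_mono_AE integrable_min_square_cube f f2 G)
    show "AE x in M. min (6 * (f x)\<^sup>2) (\<bar>t\<bar> * \<bar>f x\<bar> ^ 3) \<le> min (6 * (G x)\<^sup>2) (\<bar>t\<bar> * \<bar>G x\<bar> ^ 3)"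
      using fG
    proof eventually_elim
      case (elim x)
      then have "(f x)\<^sup>2 \<le> (G x)\<^sup>2" "\<bar>f x\<bar> ^ 3 \<le> \<bar>G x\<bar> ^ 3"
        by (auto simp: abs_le_imp_power2_le intro: power_mono)
      then show ?case by (intro min.mono mult_left_mono) auto
    qed
  qed simp
  finally show ?thesis .
qed

lemma tendsto_integral_min_square_cube:
  fixes G :: "'a \<Rightarrow> real" and r :: "nat \<Rightarrow> real"
  assumes "G \<in> borel_measurable M" "integrable M (\<lambda>x. (G x)\<^sup>2)" and r: "r \<longlonglongrightarrow> 0"
  shows "(\<lambda>n. \<integral>x. min (6 * (G x)\<^sup>2) (\<bar>r n\<bar> * \<bar>G x\<bar> ^ 3) \<partial>M) \<longlonglongrightarrow> 0"
proof -
  have "(\<lambda>n. \<integral>x. min (6 * (G x)\<^sup>2) (\<bar>r n\<bar> * \<bar>G x\<bar> ^ 3) \<partial>M) \<longlonglongrightarrow> (\<integral>x. 0 \<partial>M)"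
  proof (rule integral_dominated_convergence[where w="\<lambda>x. 6 * (G x)\<^sup>2"])
    have "(\<lambda>n. min (6 * (G x)\<^sup>2) (\<bar>r n\<bar> * \<bar>G x\<bar> ^ 3)) \<longlonglongrightarrow> min (6 * (G x)\<^sup>2) (\<bar>0\<bar> * \<bar>G x\<bar> ^ 3)" for x
      by (intro tendsto_intros r)
    then show "AE x in M. (\<lambda>n. min (6 * (G x)\<^sup>2) (\<bar>r n\<bar> * \<bar>G x\<bar> ^ 3)) \<longlonglongrightarrow> 0"
      by simp
  qed (use assms in auto)
  then show ?thesis by simp
qed

lemma (in prob_space) norm_char_minus_exp_le:
  fixes f G :: "'a \<Rightarrow> real"
  assumes f: "f \<in> borel_measurable M" and G: "G \<in> borel_measurable M" "integrable M (\<lambda>x. (G x)\<^sup>2)"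
    and fG: "AE x in M. \<bar>f x\<bar> \<le> G x" and mean0: "expectation f = 0"
  shows "cmod (char (distr M borel f) t - of_real (exp (- (t\<^sup>2 / 2 * expectation (\<lambda>x. (f x)\<^sup>2)))))
    \<le> t\<^sup>2 / 6 * expectation (\<lambda>x. min (6 * (G x)\<^sup>2) (\<bar>t\<bar> * \<bar>G x\<bar> ^ 3))
       + (t\<^sup>2 / 2 * expectation (\<lambda>x. (G x)\<^sup>2))\<^sup>2"
proof (rule norm_diff_triangle_le)
  define x where "x = t\<^sup>2 / 2 * expectation (\<lambda>x. (f x)\<^sup>2)"
  have "expectation (\<lambda>x. (f x)\<^sup>2) \<le> expectation (\<lambda>x. (G x)\<^sup>2)"
    using fG by (intro integral_mono_AE square_integrable_dominated[OF f G(2)] G(2))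
      (auto elim!: eventually_mono simp: abs_le_imp_power2_le)
  then have x: "0 \<le> x" "x \<le> t\<^sup>2 / 2 * expectation (\<lambda>x. (G x)\<^sup>2)"
    unfolding x_def by (auto intro!: mult_left_mono)
  show "cmod (char (distr M borel f) t - of_real (1 - x))
      \<le> t\<^sup>2 / 6 * expectation (\<lambda>x. min (6 * (G x)\<^sup>2) (\<bar>t\<bar> * \<bar>G x\<bar> ^ 3))"
    unfolding x_def using char_approx_dominated[OF f G fG mean0, of t] by (simp add: field_simps)
  have "\<bar>(1 - x) - exp (- x)\<bar> \<le> x\<^sup>2"
    using abs_exp_neg_minus_linear_le[OF x(1)] by (simp add: abs_minus_commute)
  also have "\<dots> \<le> (t\<^sup>2 / 2 * expectation (\<lambda>x. (G x)\<^sup>2))\<^sup>2" using x by (intro power_mono) auto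
  finally show "cmod (of_real (1 - x) - of_real (exp (- x)))
      \<le> (t\<^sup>2 / 2 * expectation (\<lambda>x. (G x)\<^sup>2))\<^sup>2"
    by (simp del: of_real_diff add: of_real_diff[symmetric])
qed

lemma (in prob_space) norm_prod_char_minus_exp_le:
  fixes f :: "'j \<Rightarrow> 'a \<Rightarrow> real" and G :: "'a \<Rightarrow> real"
  assumes J: "finite J" and f: "\<And>j. j \<in> J \<Longrightarrow> f j \<in> borel_measurable M"
    and G: "G \<in> borel_measurable M" "integrable M (\<lambda>x. (G x)\<^sup>2)"
    and fG: "\<And>j. j \<in> J \<Longrightarrow> AE x in M. \<bar>f j x\<bar> \<le> G x"
    and mean0: "\<And>j. j \<in> J \<Longrightarrow> expectation (f j) = 0"
  shows "cmod ((\<Prod>j\<in>J. char (distr M borel (f j)) t)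
                - of_real (exp (- (t\<^sup>2 / 2 * (\<Sum>j\<in>J. expectation (\<lambda>x. (f j x)\<^sup>2))))))
    \<le> card J * (t\<^sup>2 / 6 * expectation (\<lambda>x. min (6 * (G x)\<^sup>2) (\<bar>t\<bar> * \<bar>G x\<bar> ^ 3))
                 + (t\<^sup>2 / 2 * expectation (\<lambda>x. (G x)\<^sup>2))\<^sup>2)"
proof -
  define c where "c j = char (distr M borel (f j)) t" for j
  define x where "x j = t\<^sup>2 / 2 * expectation (\<lambda>x. (f j x)\<^sup>2)" for j
  have "exp (- (\<Sum>j\<in>J. x j)) = (\<Prod>j\<in>J. exp (- x j))"
    using exp_sum[OF J, of "\<lambda>j. - x j"] by (simp add: sum_negf)
  then have "cmod ((\<Prod>j\<in>J. c j) - of_real (exp (- (\<Sum>j\<in>J. x j))))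
      = cmod ((\<Prod>j\<in>J. c j) - (\<Prod>j\<in>J. of_real (exp (- x j))))"
    by simp
  also have "\<dots> \<le> (\<Sum>j\<in>J. cmod (c j - of_real (exp (- x j))))"
  proof (rule norm_prod_diff)
    show "cmod (c j) \<le> 1" if "j \<in> J" for j
      unfolding c_def using f[OF that] by (intro real_distribution.cmod_char_le_1 real_distribution_distr)
    show "cmod (of_real (exp (- x j)) :: complex) \<le> 1" if "j \<in> J" for j
      by (simp add: x_def)
  qed
  also have "\<dots> \<le> (\<Sum>j\<in>J. t\<^sup>2 / 6 * expectation (\<lambda>x. min (6 * (G x)\<^sup>2) (\<bar>t\<bar> * \<bar>G x\<bar> ^ 3))
                 + (t\<^sup>2 / 2 * expectation (\<lambda>x. (G x)\<^sup>2))\<^sup>2)"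
    unfolding c_def x_def by (intro sum_mono norm_char_minus_exp_le f G fG mean0)
  finally show ?thesis
    unfolding c_def x_def by (simp add: sum_distrib_left)
qed

lemma (in prob_space) norm_prod_char_scaled_minus_exp_le:
  fixes f :: "'j \<Rightarrow> 'a \<Rightarrow> real" and G :: "'a \<Rightarrow> real" and s :: real
  assumes J: "finite J" "J \<noteq> {}" and f: "\<And>j. j \<in> J \<Longrightarrow> f j \<in> borel_measurable M"
    and G: "G \<in> borel_measurable M" "integrable M (\<lambda>x. (G x)\<^sup>2)"
    and fG: "\<And>j. j \<in> J \<Longrightarrow> AE x in M. \<bar>f j x\<bar> \<le> G x"
    and mean0: "\<And>j. j \<in> J \<Longrightarrow> expectation (f j) = 0"
  defines "t \<equiv> s / sqrt (card J)"
  shows "cmod ((\<Prod>j\<in>J. char (distr M borel (f j)) t)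
                - of_real (exp (- (s\<^sup>2 / 2 * ((\<Sum>j\<in>J. expectation (\<lambda>x. (f j x)\<^sup>2)) / card J)))))
    \<le> s\<^sup>2 / 6 * expectation (\<lambda>x. min (6 * (G x)\<^sup>2) (\<bar>t\<bar> * \<bar>G x\<bar> ^ 3))
       + (s\<^sup>2 / 2 * expectation (\<lambda>x. (G x)\<^sup>2))\<^sup>2 / card J"
proof -
  have K: "0 < real (card J)" using J by auto
  have t2: "t\<^sup>2 = s\<^sup>2 / card J" using K by (simp add: t_def power_divide)
  have arg: "s\<^sup>2 / 2 * ((\<Sum>j\<in>J. expectation (\<lambda>x. (f j x)\<^sup>2)) / card J)
      = t\<^sup>2 / 2 * (\<Sum>j\<in>J. expectation (\<lambda>x. (f j x)\<^sup>2))"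
    unfolding t2 by (simp add: field_simps)
  have "cmod ((\<Prod>j\<in>J. char (distr M borel (f j)) t)
                - of_real (exp (- (s\<^sup>2 / 2 * ((\<Sum>j\<in>J. expectation (\<lambda>x. (f j x)\<^sup>2)) / card J)))))
      \<le> card J * (t\<^sup>2 / 6 * expectation (\<lambda>x. min (6 * (G x)\<^sup>2) (\<bar>t\<bar> * \<bar>G x\<bar> ^ 3))
                   + (t\<^sup>2 / 2 * expectation (\<lambda>x. (G x)\<^sup>2))\<^sup>2)"
    unfolding arg by (rule norm_prod_char_minus_exp_le[OF J(1) f G fG mean0])
  also have "\<dots> = s\<^sup>2 / 6 * expectation (\<lambda>x. min (6 * (G x)\<^sup>2) (\<bar>t\<bar> * \<bar>G x\<bar> ^ 3))
       + (s\<^sup>2 / 2 * expectation (\<lambda>x. (G x)\<^sup>2))\<^sup>2 / card J"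
    unfolding t2 using K by (simp add: field_simps power2_eq_square)
  finally show ?thesis .
qed

lemma char_prod_tendsto_exp:
  fixes U :: "'a measure" and J :: "nat \<Rightarrow> 'j set" and f :: "nat \<Rightarrow> 'j \<Rightarrow> 'a \<Rightarrow> real"
    and G :: "'a \<Rightarrow> real"
  assumes U: "prob_space U" and J: "\<And>n. finite (J n)" "filterlim (\<lambda>n. card (J n)) at_top sequentially"
    and f: "\<And>n j. j \<in> J n \<Longrightarrow> f n j \<in> borel_measurable U"
    and G: "G \<in> borel_measurable U" "integrable U (\<lambda>x. (G x)\<^sup>2)"
    and fG: "\<And>n j. j \<in> J n \<Longrightarrow> AE x in U. \<bar>f n j x\<bar> \<le> G x"
    and mean0: "\<And>n j. j \<in> J n \<Longrightarrow> (\<integral>x. f n j x \<partial>U) = 0"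
    and var: "(\<lambda>n. (\<Sum>j\<in>J n. \<integral>x. (f n j x)\<^sup>2 \<partial>U) / card (J n)) \<longlonglongrightarrow> V"
  shows "(\<lambda>n. \<Prod>j\<in>J n. char (distr U borel (f n j)) (s / sqrt (card (J n))))
           \<longlonglongrightarrow> of_real (exp (- (s\<^sup>2 * V / 2)))"
proof -
  interpret prob_space U by (rule U)
  define K where "K n = real (card (J n))" for n
  define \<rho> where "\<rho> n = (\<integral>x. min (6 * (G x)\<^sup>2) (\<bar>s / sqrt (K n)\<bar> * \<bar>G x\<bar> ^ 3) \<partial>U)" for n
  define \<phi> where "\<phi> n = (\<Prod>j\<in>J n. char (distr U borel (f n j)) (s / sqrt (K n)))" for n
  define a where "a n = s\<^sup>2 / 2 * ((\<Sum>j\<in>J n. \<integral>x. (f n j x)\<^sup>2 \<partial>U) / K n)" for n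
  have K: "filterlim K at_top sequentially"
    unfolding K_def using J(2) by (simp add: filterlim_sequentially_iff_filterlim_real)
  then have "(\<lambda>n. s / sqrt (K n)) \<longlonglongrightarrow> 0"
    by (intro tendsto_divide_0[OF tendsto_const] filterlim_at_top_imp_at_infinity
        filterlim_compose[OF sqrt_at_top])
  then have "\<rho> \<longlonglongrightarrow> 0"
    unfolding \<rho>_def by (rule tendsto_integral_min_square_cube[OF G])
  then have "(\<lambda>n. s\<^sup>2 / 6 * \<rho> n + (s\<^sup>2 / 2 * (\<integral>x. (G x)\<^sup>2 \<partial>U))\<^sup>2 / K n) \<longlonglongrightarrow> s\<^sup>2 / 6 * 0 + 0"
    by (intro tendsto_add tendsto_mult tendsto_const tendsto_divide_0[OF tendsto_const]
        filterlim_at_top_imp_at_infinity K)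
  then have err: "(\<lambda>n. s\<^sup>2 / 6 * \<rho> n + (s\<^sup>2 / 2 * (\<integral>x. (G x)\<^sup>2 \<partial>U))\<^sup>2 / K n) \<longlonglongrightarrow> 0"
    by simp
  have "eventually (\<lambda>n. 0 < K n) sequentially" using K by (simp add: filterlim_at_top_dense)
  then have "eventually (\<lambda>n. norm (\<phi> n - of_real (exp (- a n)))
      \<le> s\<^sup>2 / 6 * \<rho> n + (s\<^sup>2 / 2 * (\<integral>x. (G x)\<^sup>2 \<partial>U))\<^sup>2 / K n) sequentially"
  proof eventually_elim
    case (elim n)
    then have "J n \<noteq> {}" by (auto simp: K_def)
    from norm_prod_char_scaled_minus_exp_le[OF J(1) this f G fG mean0, where s = s]
    show ?case unfolding \<phi>_def a_def \<rho>_def K_def .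
  qed
  from Lim_null_comparison[OF this err]
  have "(\<lambda>n. \<phi> n - of_real (exp (- a n))) \<longlonglongrightarrow> 0" .
  moreover have "a \<longlonglongrightarrow> s\<^sup>2 * V / 2"
    unfolding a_def K_def using tendsto_mult_left[OF var, of "s\<^sup>2 / 2"] by simp
  then have "(\<lambda>n. of_real (exp (- a n)) :: complex) \<longlonglongrightarrow> of_real (exp (- (s\<^sup>2 * V / 2)))"
    by (intro tendsto_intros)
  ultimately have "(\<lambda>n. (\<phi> n - of_real (exp (- a n))) + of_real (exp (- a n)))
      \<longlonglongrightarrow> 0 + of_real (exp (- (s\<^sup>2 * V / 2)))"
    by (rule tendsto_add)
  then show ?thesis by (simp add: \<phi>_def K_def)
qed

theorem clt_dominated_triangular_array:
  fixes U :: "'a measure" and J :: "nat \<Rightarrow> 'j set" and f :: "nat \<Rightarrow> 'j \<Rightarrow> 'a \<Rightarrow> real"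
    and G :: "'a \<Rightarrow> real"
  assumes U: "prob_space U" and J: "\<And>n. finite (J n)" "filterlim (\<lambda>n. card (J n)) at_top sequentially"
    and f: "\<And>n j. j \<in> J n \<Longrightarrow> f n j \<in> borel_measurable U"
    and G: "G \<in> borel_measurable U" "integrable U (\<lambda>x. (G x)\<^sup>2)"
    and fG: "\<And>n j. j \<in> J n \<Longrightarrow> AE x in U. \<bar>f n j x\<bar> \<le> G x"
    and mean0: "\<And>n j. j \<in> J n \<Longrightarrow> (\<integral>x. f n j x \<partial>U) = 0"
    and var: "(\<lambda>n. (\<Sum>j\<in>J n. \<integral>x. (f n j x)\<^sup>2 \<partial>U) / card (J n)) \<longlonglongrightarrow> V"
  shows "weak_conv_m
           (\<lambda>n. distr (PiM (J n) (\<lambda>_. U)) borel (\<lambda>\<omega>. (\<Sum>j\<in>J n. f n j (\<omega> j)) / sqrt (card (J n))))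
           (normal_measure 0 V)"
proof (rule levy_continuity)
  have V: "0 \<le> V"
    by (rule LIMSEQ_le_const[OF var]) (auto intro!: sum_nonneg divide_nonneg_nonneg)
  show "real_distribution (normal_measure 0 V)" by (rule real_distribution_normal_measure[OF V])
  show "real_distribution
          (distr (PiM (J n) (\<lambda>_. U)) borel (\<lambda>\<omega>. (\<Sum>j\<in>J n. f n j (\<omega> j)) / sqrt (card (J n))))" for n
  proof (intro prob_space.real_distribution_distr prob_space_PiM U borel_measurable_divide
      borel_measurable_const borel_measurable_sum)
    show "(\<lambda>\<omega>. f n j (\<omega> j)) \<in> borel_measurable (PiM (J n) (\<lambda>_. U))" if "j \<in> J n" for j
      using measurable_compose[OF measurable_component_singleton[OF that] f[OF that]] .
  qed
  show "(\<lambda>n. char (distr (PiM (J n) (\<lambda>_. U)) borel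
                   (\<lambda>\<omega>. (\<Sum>j\<in>J n. f n j (\<omega> j)) / sqrt (card (J n)))) s)
          \<longlonglongrightarrow> char (normal_measure 0 V) s" for s
  proof -
    have "char (distr (PiM (J n) (\<lambda>_. U)) borel (\<lambda>\<omega>. (\<Sum>j\<in>J n. f n j (\<omega> j)) / sqrt (card (J n)))) s
        = (\<Prod>j\<in>J n. char (distr U borel (f n j)) (s / sqrt (card (J n))))" for n
      by (rule char_distr_sum_PiM[OF U J(1) f])
    then show ?thesis
      using char_prod_tendsto_exp[OF U J f G fG mean0 var] by (simp add: char_normal_measure[OF V])
  qed
qed

section \<open>Versions of conditional expectations\<close>

lemma cond_exp_version_integral_mult:
  fixes X :: "'a \<Rightarrow> 'b::topological_space"
  assumes "finite_measure M" and X[measurable]: "X \<in> M \<rightarrow>\<^sub>M borel"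
    and ce: "cond_exp_version M X f g"
    and k[measurable]: "k \<in> borel_measurable borel" and int: "integrable M (\<lambda>w. k (X w) * f w)"
  shows "integrable M (\<lambda>w. k (X w) * g (X w))"
    and "(\<integral>w. k (X w) * f w \<partial>M) = (\<integral>w. k (X w) * g (X w) \<partial>M)"
proof -
  interpret finite_measure M by fact
  have [measurable]: "g \<in> borel_measurable borel" and f: "integrable M f"
    and gX: "integrable M (\<lambda>w. g (X w))"
    and g: "\<And>A. A \<in> sets borel \<Longrightarrow>
              (\<integral>w. indicator A (X w) * f w \<partial>M) = (\<integral>w. indicator A (X w) * g (X w) \<partial>M)"
    using ce unfolding cond_exp_version_def by auto
  have [measurable]: "f \<in> borel_measurable M" using f by simp
  define F where "F = vimage_algebra (space M) X borel"
  have sets_F: "sets F = {X -` A \<inter> space M |A. A \<in> sets borel}"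
    unfolding F_def by (rule sets_vimage_algebra2) auto
  have "subalgebra M F"
    unfolding subalgebra_def using sets_F by (auto simp: F_def)
  then interpret finite_measure_subalgebra M F by unfold_locales
  have X_F: "X \<in> F \<rightarrow>\<^sub>M borel"
    unfolding F_def by (rule measurable_vimage_algebra1) auto
  have gX_F: "(\<lambda>w. g (X w)) \<in> borel_measurable F" and kX_F: "(\<lambda>w. k (X w)) \<in> borel_measurable F"
    using measurable_comp[OF X_F, of g borel] measurable_comp[OF X_F, of k borel] by (auto simp: comp_def)
  \<comment> \<open>\<open>g \<circ> X\<close> is a version of \<open>E[f | \<sigma>(X)]\<close>, through which \<open>\<sigma>(X)\<close>-measurable factors pass.\<close>
  have "AE w in M. real_cond_exp M F f w = g (X w)"
  proof (rule real_cond_exp_charact)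
    fix A assume "A \<in> sets F"
    then obtain B where B: "B \<in> sets borel" "A = X -` B \<inter> space M" using sets_F by auto
    have "(\<integral>w\<in>A. h w \<partial>M) = (\<integral>w. indicator B (X w) * h w \<partial>M)" for h :: "'a \<Rightarrow> real"
      unfolding B(2) set_lebesgue_integral_def
      by (rule Bochner_Integration.integral_cong) (auto simp: indicator_def)
    then show "(\<integral>w\<in>A. f w \<partial>M) = (\<integral>w\<in>A. g (X w) \<partial>M)" using g[OF B(1)] by simp
  qed (use f gX gX_F in auto)
  then have AE_eq: "AE w in M. k (X w) * real_cond_exp M F f w = k (X w) * g (X w)" by auto
  have int_cond_exp: "integrable M (\<lambda>w. k (X w) * real_cond_exp M F f w)"
    and eq: "(\<integral>w. k (X w) * real_cond_exp M F f w \<partial>M) = (\<integral>w. k (X w) * f w \<partial>M)"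
    using real_cond_exp_intg[OF int kX_F] by auto
  show "integrable M (\<lambda>w. k (X w) * g (X w))"
    using integrable_cong_AE_imp[OF int_cond_exp _ AE_eq] by simp
  show "(\<integral>w. k (X w) * f w \<partial>M) = (\<integral>w. k (X w) * g (X w) \<partial>M)"
    using integral_cong_AE[OF _ _ AE_eq] eq by simp
qed

lemma cond_exp_version_integral_mult_residual:
  fixes X :: "'a \<Rightarrow> 'b::topological_space"
  assumes "finite_measure M" "X \<in> M \<rightarrow>\<^sub>M borel" "cond_exp_version M X f g"
    and "k \<in> borel_measurable borel" "integrable M (\<lambda>w. k (X w) * f w)"
  shows "integrable M (\<lambda>w. k (X w) * (f w - g (X w)))"
    and "(\<integral>w. k (X w) * (f w - g (X w)) \<partial>M) = 0"
  using cond_exp_version_integral_mult[OF assms] assms(5) by (simp_all add: right_diff_distrib)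

section \<open>Randomised treatment assignment\<close>

lemma sets_unit_measure[measurable_cong]: "sets (unit_measure P) = sets (P \<Otimes>\<^sub>M borel)"
  unfolding unit_measure_def by (intro sets_pair_measure_cong) auto

lemma prob_space_unit_measure: "prob_space P \<Longrightarrow> prob_space (unit_measure P)"
  unfolding unit_measure_def by (intro prob_space_pair prob_space_uniform_measure) auto

lemma distr_unit_measure_fst: "distr (unit_measure P) P fst = P"
  unfolding unit_measure_def by (intro prob_space.distr_pair_fst prob_space_uniform_measure) auto

lemma integrable_unit_measure_fst:
  fixes f :: "('x::topological_space \<times> real \<times> real) \<Rightarrow> real"
  assumes "integrable P f"
  shows "integrable (unit_measure P) (\<lambda>u. f (fst u))"
proof -
  have "fst \<in> unit_measure P \<rightarrow>\<^sub>M P" by (simp add: unit_measure_def)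
  then show ?thesis
    using integrable_distr_eq[of fst "unit_measure P" P f] assms by (simp add: distr_unit_measure_fst)
qed

lemma AE_unit_measure_fst:
  assumes "AE w in P. Q w"
  shows "AE u in unit_measure P. Q (fst u)"
proof (rule AE_distrD[of fst])
  show "fst \<in> unit_measure P \<rightarrow>\<^sub>M P" by (simp add: unit_measure_def)
  show "AE w in distr (unit_measure P) P fst. Q w" unfolding distr_unit_measure_fst by (rule assms)
qed

lemma integral_uniform_threshold:
  fixes a b c :: real assumes "0 \<le> c" "c \<le> 1"
  shows "(\<integral>r. (if r \<le> c then a else b) \<partial>uniform_measure lborel {0..1}) = c * a + (1 - c) * b"
proof -
  let ?U = "uniform_measure lborel {0..1::real}"
  interpret prob_space ?U by (rule prob_space_uniform_measure) auto
  have "{0..1} \<inter> {..c} = {0..c}" using assms by auto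
  then have "measure ?U {..c} = c" using assms by simp
  moreover have "(\<integral>r. (if r \<le> c then a else b) \<partial>?U) = (\<integral>r. b + (a - b) * indicator {..c} r \<partial>?U)"
    by (rule Bochner_Integration.integral_cong) (auto simp: indicator_def)
  moreover have "(\<integral>r. b + (a - b) * indicator {..c} r \<partial>?U) = b + (a - b) * measure ?U {..c}"
    by (subst Bochner_Integration.integral_add) (auto simp: prob_space emeasure_eq_measure)
  ultimately show ?thesis by (simp add: algebra_simps)
qed

lemma integral_unit_measure_threshold:
  fixes a b p :: "('x::topological_space \<times> real \<times> real) \<Rightarrow> real"
  assumes "sigma_finite_measure P"
    and [measurable]: "a \<in> borel_measurable P" "b \<in> borel_measurable P" "p \<in> borel_measurable P"
    and p: "AE w in P. 0 \<le> p w \<and> p w \<le> 1"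
    and int: "integrable (unit_measure P) (\<lambda>u. if snd u \<le> p (fst u) then a (fst u) else b (fst u))"
  shows "(\<integral>u. (if snd u \<le> p (fst u) then a (fst u) else b (fst u)) \<partial>unit_measure P)
       = (\<integral>w. p w * a w + (1 - p w) * b w \<partial>P)"
proof -
  let ?U = "uniform_measure lborel {0..1::real}"
  have "prob_space ?U" by (rule prob_space_uniform_measure) auto
  then interpret pair_sigma_finite P ?U
    unfolding pair_sigma_finite_def using assms(1) prob_space_imp_sigma_finite by auto
  define F where "F u = (if snd u \<le> p (fst u) then a (fst u) else b (fst u))" for u
  have "(\<integral>u. F u \<partial>unit_measure P) = (\<integral>w. (\<integral>r. F (w, r) \<partial>?U) \<partial>P)"
    using int unfolding F_def unit_measure_def by (rule integral_fst'[symmetric])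
  then have "(\<integral>u. (if snd u \<le> p (fst u) then a (fst u) else b (fst u)) \<partial>unit_measure P)
      = (\<integral>w. (\<integral>r. (if r \<le> p w then a w else b w) \<partial>?U) \<partial>P)"
    by (simp add: F_def cong: if_cong)
  also have "\<dots> = (\<integral>w. p w * a w + (1 - p w) * b w \<partial>P)"
  proof (rule integral_cong_AE)
    show "(\<lambda>w. \<integral>r. (if r \<le> p w then a w else b w) \<partial>?U) \<in> borel_measurable P"
      by (rule M2.borel_measurable_lebesgue_integral) measurable
    show "AE w in P. (\<integral>r. (if r \<le> p w then a w else b w) \<partial>?U) = p w * a w + (1 - p w) * b w"
      using p by eventually_elim (simp add: integral_uniform_threshold)
  qed measurable
  finally show ?thesis .
qed

lemma batch_index_Sigma: "batch_index T Nt = Sigma {..<T} (\<lambda>t. {..<Nt t})"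
  unfolding batch_index_def by auto

lemma finite_batch_index: "finite (batch_index T Nt)"
  unfolding batch_index_Sigma by auto

lemma card_batch_index: "card (batch_index T Nt) = (\<Sum>t<T. Nt t)"
  unfolding batch_index_Sigma by simp

lemma sum_batch_index_fst: "(\<Sum>j\<in>batch_index T Nt. g (fst j)) = (\<Sum>t<T. real (Nt t) * g t)"
proof -
  have "(\<Sum>j\<in>batch_index T Nt. g (fst j)) = (\<Sum>t<T. \<Sum>i<Nt t. g t)"
    unfolding batch_index_Sigma by (subst sum.Sigma) (auto simp: split_def)
  then show ?thesis by simp
qed

lemma sqrt_card_mult_mean_minus:
  fixes x :: "'j \<Rightarrow> real"
  assumes "finite A"
  shows "sqrt (card A) * (1 / card A * (\<Sum>j\<in>A. x j) - c) = (\<Sum>j\<in>A. x j - c) / sqrt (card A)"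
proof (cases "A = {}")
  case False
  then have n: "0 < real (card A)" using assms by auto
  have "sqrt (card A) * (1 / card A * (\<Sum>j\<in>A. x j) - c)
      = sqrt (card A) * ((\<Sum>j\<in>A. x j - c) / (sqrt (card A) * sqrt (card A)))"
    using n by (simp add: sum_subtractf field_simps)
  also have "\<dots> = (\<Sum>j\<in>A. x j - c) / sqrt (card A)"
    using n by (simp add: field_simps)
  finally show ?thesis .
qed simp

section \<open>The AIPW score\<close>

lemma borel_measurable_Xof[measurable]:
  "Xof \<in> borel_measurable (borel :: ('x::second_countable_topology \<times> real \<times> real) measure)"
  unfolding Xof_def by (intro borel_measurable_continuous_onI continuous_intros)

lemma borel_measurable_Ypot[measurable]:
  "Ypot z \<in> borel_measurable (borel :: ('x::second_countable_topology \<times> real \<times> real) measure)"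
  unfolding Ypot_def by (cases "z = 1") (auto intro!: borel_measurable_continuous_onI continuous_intros)

lemma abs_divide_le_inverse:
  fixes a b c :: real
  assumes "0 \<le> a" "a \<le> 1" "0 < c" "c \<le> b"
  shows "\<bar>a / b\<bar> \<le> 1 / c"
  using assms by (simp add: frac_le)

lemma aipw_mean_expansion:
  fixes p e D R1 R0 :: real
  shows "p * (D + R1 / e) + (1 - p) * (D - R0 / (1 - e)) = D + (p / e * R1 - (1 - p) / (1 - e) * R0)"
  by (simp add: divide_inverse algebra_simps)

lemma aipw_square_expansion:
  fixes p e D R1 R0 :: real
  shows "p * (D + R1 / e)\<^sup>2 + (1 - p) * (D - R0 / (1 - e))\<^sup>2
       = D\<^sup>2 + (2 * D * (p / e) * R1 - 2 * D * ((1 - p) / (1 - e)) * R0)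
           + (p / e\<^sup>2 * R1\<^sup>2 + (1 - p) / (1 - e)\<^sup>2 * R0\<^sup>2)"
proof -
  have "p * (D + A)\<^sup>2 + (1 - p) * (D - B)\<^sup>2
      = D\<^sup>2 + (2 * D * p * A - 2 * D * (1 - p) * B) + (p * A\<^sup>2 + (1 - p) * B\<^sup>2)" for A B :: real
    by (simp add: power2_eq_square algebra_simps)
  from this[of "R1 / e" "R0 / (1 - e)"] show ?thesis by (simp add: power_divide)
qed

lemma divide_power2_self: "x / x\<^sup>2 = 1 / (x::real)"
  by (cases "x = 0") (simp_all add: power2_eq_square)

lemma mixture_second_moment_identity:
  fixes w e :: "nat \<Rightarrow> real" and a b c :: real
  assumes w: "(\<Sum>t<T. w t) = 1"
  defines "\<epsilon> \<equiv> \<Sum>t<T. w t * e t"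
  shows "(\<Sum>t<T. w t * (a + (e t / \<epsilon>\<^sup>2 * b + (1 - e t) / (1 - \<epsilon>)\<^sup>2 * c))) = b / \<epsilon> + c / (1 - \<epsilon>) + a"
proof -
  have "(\<Sum>t<T. w t * (a + (e t / \<epsilon>\<^sup>2 * b + (1 - e t) / (1 - \<epsilon>)\<^sup>2 * c)))
      = (\<Sum>t<T. w t) * a + ((\<Sum>t<T. w t * e t) / \<epsilon>\<^sup>2 * b + (\<Sum>t<T. w t * (1 - e t)) / (1 - \<epsilon>)\<^sup>2 * c)"
    by (simp add: sum.distrib sum_distrib_left sum_distrib_right sum_divide_distrib algebra_simps)
  also have "(\<Sum>t<T. w t * (1 - e t)) = 1 - \<epsilon>"
    using w by (simp add: \<epsilon>_def right_diff_distrib sum_subtractf)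
  finally show ?thesis using w by (simp add: \<epsilon>_def[symmetric] divide_power2_self)
qed

lemma sum_batch_fractions:
  fixes Nt :: "nat \<Rightarrow> nat"
  assumes "0 < (\<Sum>t<T. Nt t)"
  shows "(\<Sum>t<T. real (Nt t) / real (\<Sum>s<T. Nt s)) = 1"
proof -
  have "(\<Sum>t<T. real (Nt t) / real (\<Sum>s<T. Nt s)) = real (\<Sum>s<T. Nt s) / real (\<Sum>s<T. Nt s)"
    by (simp only: sum_divide_distrib[symmetric] of_nat_sum)
  also have "\<dots> = 1" using assms by (intro divide_self) (simp only: of_nat_eq_0_iff neq0_conv)
  finally show ?thesis .
qed

locale aipw_model =
  fixes P :: "('x::second_countable_topology \<times> real \<times> real) measure"
    and XX :: "'x set" and m0 v0 :: "nat \<Rightarrow> 'x \<Rightarrow> real" and \<gamma> :: real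
  assumes prob_space_P: "prob_space P"
    and sets_P: "sets P = sets borel"
    and AE_Xof_in: "AE w in P. Xof w \<in> XX"
    and gamma_pos: "0 < \<gamma>"
    and square_integrable_Ypot: "\<And>z. z \<in> {0, 1} \<Longrightarrow> integrable P (\<lambda>w. (Ypot z w)\<^sup>2)"
    and cond_exp_m0: "\<And>z. z \<in> {0, 1} \<Longrightarrow> cond_exp_version P Xof (Ypot z) (m0 z)"
    and cond_exp_v0: "\<And>z. z \<in> {0, 1} \<Longrightarrow>
      cond_exp_version P Xof (\<lambda>w. (Ypot z w - m0 z (Xof w))\<^sup>2) (v0 z)"
begin

sublocale prob_space P by (rule prob_space_P)

definition ate :: real where
  "ate = (\<integral>w. Ypot 1 w - Ypot 0 w \<partial>P)"

definition residual :: "nat \<Rightarrow> 'x \<times> real \<times> real \<Rightarrow> real" where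
  "residual z w = Ypot z w - m0 z (Xof w)"

definition cate_dev :: "'x \<Rightarrow> real" where
  "cate_dev x = m0 1 x - m0 0 x - ate"

text \<open>The class \<open>F\<^sub>\<gamma>\<close> of the paper; the bounds are only needed on the support \<open>XX\<close> of \<open>X\<close>.\<close>
definition propensities :: "('x \<Rightarrow> real) set" where
  "propensities = {\<epsilon> \<in> borel_measurable borel. \<forall>x\<in>XX. \<gamma> \<le> \<epsilon> x \<and> \<epsilon> x \<le> 1 - \<gamma>}"

text \<open>Treatment is assigned with propensity \<open>p\<close>; the score is evaluated at propensity \<open>\<epsilon>\<close>.\<close>
definition centered_score :: "('x \<Rightarrow> real) \<Rightarrow> ('x \<Rightarrow> real) \<Rightarrow> ('x \<times> real \<times> real) \<times> real \<Rightarrow> real"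
  where "centered_score p \<epsilon> u = s_aipw_b m0 \<epsilon> (Xof (fst u)) (Zobs p u) (Yobs p u) - ate"

definition treated_score :: "('x \<Rightarrow> real) \<Rightarrow> 'x \<times> real \<times> real \<Rightarrow> real" where
  "treated_score \<epsilon> w = cate_dev (Xof w) + residual 1 w / \<epsilon> (Xof w)"

definition control_score :: "('x \<Rightarrow> real) \<Rightarrow> 'x \<times> real \<times> real \<Rightarrow> real" where
  "control_score \<epsilon> w = cate_dev (Xof w) - residual 0 w / (1 - \<epsilon> (Xof w))"

definition score_envelope :: "'x \<times> real \<times> real \<Rightarrow> real" where
  "score_envelope w = \<bar>cate_dev (Xof w)\<bar> + (\<bar>residual 1 w\<bar> + \<bar>residual 0 w\<bar>) / \<gamma>"

definition aipw_variance :: "('x \<Rightarrow> real) \<Rightarrow> real" where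
  "aipw_variance \<epsilon> = (\<integral>w. v0 1 (Xof w) / \<epsilon> (Xof w) + v0 0 (Xof w) / (1 - \<epsilon> (Xof w))
                          + (cate_dev (Xof w))\<^sup>2 \<partial>P)"

lemma measurable_Xof_P[measurable]: "Xof \<in> P \<rightarrow>\<^sub>M borel"
  using sets_P by (simp cong: measurable_cong_sets)

lemma borel_measurable_Ypot_P[measurable]: "Ypot z \<in> borel_measurable P"
  using sets_P by (simp cong: measurable_cong_sets)

lemma borel_measurable_m0_v0:
  assumes "z \<in> {0, 1}"
  shows "m0 z \<in> borel_measurable borel" and "v0 z \<in> borel_measurable borel"
  using cond_exp_m0[OF assms] cond_exp_v0[OF assms] unfolding cond_exp_version_def by auto

lemma borel_measurable_m0[measurable]: "m0 0 \<in> borel_measurable borel" "m0 1 \<in> borel_measurable borel"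
  using borel_measurable_m0_v0(1)[of 0] borel_measurable_m0_v0(1)[of 1] by simp_all

lemma borel_measurable_v0[measurable]: "v0 0 \<in> borel_measurable borel" "v0 1 \<in> borel_measurable borel"
  using borel_measurable_m0_v0(2)[of 0] borel_measurable_m0_v0(2)[of 1] by simp_all

lemma borel_measurable_cate_dev[measurable]: "cate_dev \<in> borel_measurable borel"
  unfolding cate_dev_def by measurable

lemma borel_measurable_residual[measurable]: "residual 0 \<in> borel_measurable P" "residual 1 \<in> borel_measurable P"
  unfolding residual_def by measurable

lemma square_integrable_residual: "z \<in> {0, 1} \<Longrightarrow> integrable P (\<lambda>w. (residual z w)\<^sup>2)"
  using cond_exp_v0 unfolding cond_exp_version_def residual_def by blast

lemma integrable_v0: "z \<in> {0, 1} \<Longrightarrow> integrable P (\<lambda>w. v0 z (Xof w))"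
  using cond_exp_v0 unfolding cond_exp_version_def by blast

lemma integrable_Ypot: "z \<in> {0, 1} \<Longrightarrow> integrable P (Ypot z)"
  using square_integrable_imp_integrable[OF _ square_integrable_Ypot] by simp

lemma square_integrable_m0:
  assumes z: "z \<in> {0, 1}"
  shows "integrable P (\<lambda>w. (m0 z (Xof w))\<^sup>2)"
proof -
  have [measurable]: "m0 z \<in> borel_measurable borel" by (rule borel_measurable_m0_v0[OF z])
  have [measurable]: "residual z \<in> borel_measurable P" unfolding residual_def by measurable
  have "integrable P (\<lambda>w. (Ypot z w + - residual z w)\<^sup>2)"
    using square_integrable_Ypot[OF z] square_integrable_residual[OF z]
    by (intro square_integrable_add) auto
  then show ?thesis by (simp add: residual_def)
qed

lemma square_integrable_cate_dev: "integrable P (\<lambda>w. (cate_dev (Xof w))\<^sup>2)"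
proof -
  have "integrable P (\<lambda>w. (m0 1 (Xof w) + (- m0 0 (Xof w) + - ate))\<^sup>2)"
    using square_integrable_m0[of 0] square_integrable_m0[of 1]
    by (intro square_integrable_add; (measurable | simp))
  then show ?thesis by (simp add: cate_dev_def algebra_simps)
qed

lemma square_integrable_score_envelope: "integrable P (\<lambda>w. (score_envelope w)\<^sup>2)"
proof -
  have "integrable P (\<lambda>w. (\<bar>cate_dev (Xof w)\<bar> + (\<bar>residual 1 w\<bar> / \<gamma> + \<bar>residual 0 w\<bar> / \<gamma>))\<^sup>2)"
    by (intro square_integrable_add; (measurable)?)
      (simp_all add: power_divide square_integrable_cate_dev square_integrable_residual)
  then show ?thesis by (simp add: score_envelope_def add_divide_distrib)
qed

lemma integral_mult_residual_eq_0:
  assumes "z \<in> {0, 1}" "k \<in> borel_measurable borel" "integrable P (\<lambda>w. k (Xof w) * Ypot z w)"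
  shows "integrable P (\<lambda>w. k (Xof w) * residual z w)"
    and "(\<integral>w. k (Xof w) * residual z w \<partial>P) = 0"
  using cond_exp_version_integral_mult_residual[OF finite_measure_axioms measurable_Xof_P
      cond_exp_m0[OF assms(1)] assms(2,3)]
  by (simp_all add: residual_def)

lemma integral_mult_residual_square:
  assumes "z \<in> {0, 1}" "k \<in> borel_measurable borel" "AE w in P. \<bar>k (Xof w)\<bar> \<le> K"
  shows "integrable P (\<lambda>w. k (Xof w) * (residual z w)\<^sup>2)"
    and "integrable P (\<lambda>w. k (Xof w) * v0 z (Xof w))"
    and "(\<integral>w. k (Xof w) * (residual z w)\<^sup>2 \<partial>P) = (\<integral>w. k (Xof w) * v0 z (Xof w) \<partial>P)"
proof -
  show int: "integrable P (\<lambda>w. k (Xof w) * (residual z w)\<^sup>2)"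
    using assms by (intro integrable_bounded_mult square_integrable_residual) auto
  show "integrable P (\<lambda>w. k (Xof w) * v0 z (Xof w))"
    and "(\<integral>w. k (Xof w) * (residual z w)\<^sup>2 \<partial>P) = (\<integral>w. k (Xof w) * v0 z (Xof w) \<partial>P)"
    using cond_exp_version_integral_mult[OF finite_measure_axioms measurable_Xof_P
        cond_exp_v0[OF assms(1)] assms(2)] int
    by (simp_all add: residual_def)
qed

lemma integral_m0:
  assumes z: "z \<in> {0, 1}"
  shows "integrable P (\<lambda>w. m0 z (Xof w))" and "(\<integral>w. m0 z (Xof w) \<partial>P) = (\<integral>w. Ypot z w \<partial>P)"
proof -
  have "integrable P (residual z)" and res: "(\<integral>w. residual z w \<partial>P) = 0"
    using integral_mult_residual_eq_0[OF z, of "\<lambda>_. 1"] integrable_Ypot[OF z] by simp_all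
  then have "integrable P (\<lambda>w. Ypot z w - residual z w)"
    using integrable_Ypot[OF z] by auto
  then show m0: "integrable P (\<lambda>w. m0 z (Xof w))" by (simp add: residual_def)
  have "(\<integral>w. Ypot z w \<partial>P) = (\<integral>w. m0 z (Xof w) + residual z w \<partial>P)"
    by (simp add: residual_def)
  also have "\<dots> = (\<integral>w. m0 z (Xof w) \<partial>P)"
    using m0 \<open>integrable P (residual z)\<close> res by simp
  finally show "(\<integral>w. m0 z (Xof w) \<partial>P) = (\<integral>w. Ypot z w \<partial>P)" ..
qed

lemma propensities_bounds:
  assumes "\<epsilon> \<in> propensities" "x \<in> XX"
  shows "\<gamma> \<le> \<epsilon> x" "\<epsilon> x \<le> 1 - \<gamma>" "0 \<le> \<epsilon> x" "\<epsilon> x \<le> 1"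
  using assms gamma_pos unfolding propensities_def by auto

lemma borel_measurable_propensity: "\<epsilon> \<in> propensities \<Longrightarrow> \<epsilon> \<in> borel_measurable borel"
  unfolding propensities_def by simp

lemma convex_combination_in_propensities:
  fixes e :: "nat \<Rightarrow> 'x \<Rightarrow> real" and w :: "nat \<Rightarrow> real"
  assumes e: "\<forall>t<T. e t \<in> propensities" and w: "\<forall>t<T. 0 \<le> w t" "(\<Sum>t<T. w t) = 1"
  shows "(\<lambda>x. \<Sum>t<T. w t * e t x) \<in> propensities"
proof -
  have "\<gamma> \<le> (\<Sum>t<T. w t * e t x) \<and> (\<Sum>t<T. w t * e t x) \<le> 1 - \<gamma>" if x: "x \<in> XX" for x
  proof
    have "\<gamma> = (\<Sum>t<T. w t * \<gamma>)" using w(2) by (simp add: sum_distrib_right[symmetric])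
    also have "\<dots> \<le> (\<Sum>t<T. w t * e t x)"
      using e w x by (intro sum_mono mult_left_mono) (auto dest: propensities_bounds)
    finally show "\<gamma> \<le> (\<Sum>t<T. w t * e t x)" .
    have "(\<Sum>t<T. w t * e t x) \<le> (\<Sum>t<T. w t * (1 - \<gamma>))"
      using e w x by (intro sum_mono mult_left_mono) (auto dest: propensities_bounds)
    also have "\<dots> = 1 - \<gamma>" using w(2) by (simp add: sum_distrib_right[symmetric])
    finally show "(\<Sum>t<T. w t * e t x) \<le> 1 - \<gamma>" .
  qed
  moreover have "(\<lambda>x. \<Sum>t<T. w t * e t x) \<in> borel_measurable borel"
    using e by (intro borel_measurable_sum borel_measurable_times borel_measurable_const)
      (simp add: propensities_def)
  ultimately show ?thesis by (simp add: propensities_def)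
qed

lemma limit_in_propensities:
  assumes "eventually (\<lambda>n. \<epsilon> n \<in> propensities) sequentially" "\<epsilon>' \<in> borel_measurable borel"
    and lim: "\<And>x. x \<in> XX \<Longrightarrow> (\<lambda>n. \<epsilon> n x) \<longlonglongrightarrow> \<epsilon>' x"
  shows "\<epsilon>' \<in> propensities"
proof -
  have "\<gamma> \<le> \<epsilon>' x \<and> \<epsilon>' x \<le> 1 - \<gamma>" if x: "x \<in> XX" for x
  proof -
    have "eventually (\<lambda>n. \<gamma> \<le> \<epsilon> n x) sequentially" "eventually (\<lambda>n. \<epsilon> n x \<le> 1 - \<gamma>) sequentially"
      using assms(1) by (eventually_elim, use x in \<open>simp add: propensities_def\<close>)+
    then show ?thesis
      by (intro conjI tendsto_lowerbound[OF lim[OF x]] tendsto_upperbound[OF lim[OF x]]) simp_all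
  qed
  then show ?thesis using assms(2) by (simp add: propensities_def)
qed

lemma centered_score_split:
  "centered_score p \<epsilon> (w, r) = (if r \<le> p (Xof w) then treated_score \<epsilon> w else control_score \<epsilon> w)"
  unfolding centered_score_def treated_score_def control_score_def cate_dev_def residual_def
    s_aipw_b_def Zobs_def Yobs_def by simp

lemma borel_measurable_centered_score[measurable]:
  assumes [measurable]: "p \<in> borel_measurable borel" "\<epsilon> \<in> borel_measurable borel"
  shows "centered_score p \<epsilon> \<in> borel_measurable (unit_measure P)"
  unfolding centered_score_def s_aipw_b_def Zobs_def Yobs_def by measurable

lemma borel_measurable_treated_control_score[measurable]:
  assumes [measurable]: "\<epsilon> \<in> borel_measurable borel"
  shows "treated_score \<epsilon> \<in> borel_measurable P" and "control_score \<epsilon> \<in> borel_measurable P"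
  unfolding treated_score_def control_score_def by measurable

lemma abs_centered_score_le:
  assumes \<epsilon>: "\<epsilon> \<in> propensities" and x: "Xof w \<in> XX"
  shows "\<bar>centered_score p \<epsilon> (w, r)\<bar> \<le> score_envelope w"
proof -
  have "\<bar>residual 1 w / \<epsilon> (Xof w)\<bar> \<le> \<bar>residual 1 w\<bar> / \<gamma>"
    and "\<bar>residual 0 w / (1 - \<epsilon> (Xof w))\<bar> \<le> \<bar>residual 0 w\<bar> / \<gamma>"
    using propensities_bounds[OF \<epsilon> x] gamma_pos by (auto simp: abs_divide intro!: divide_left_mono)
  moreover have "0 \<le> \<bar>residual z w\<bar> / \<gamma>" for z using gamma_pos by simp
  ultimately show ?thesis
    unfolding centered_score_split treated_score_def control_score_def score_envelope_def
      add_divide_distrib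
    using abs_triangle_ineq[of "cate_dev (Xof w)" "residual 1 w / \<epsilon> (Xof w)"]
      abs_triangle_ineq4[of "cate_dev (Xof w)" "residual 0 w / (1 - \<epsilon> (Xof w))"]
    by (smt (verit))
qed

lemma AE_abs_centered_score_le:
  "\<epsilon> \<in> propensities \<Longrightarrow> AE u in unit_measure P. \<bar>centered_score p \<epsilon> u\<bar> \<le> score_envelope (fst u)"
  using AE_unit_measure_fst[OF AE_Xof_in] by eventually_elim (metis abs_centered_score_le prod.collapse)

lemma square_integrable_centered_score:
  assumes "p \<in> propensities" "\<epsilon> \<in> propensities"
  shows "integrable (unit_measure P) (\<lambda>u. (centered_score p \<epsilon> u)\<^sup>2)"
  using assms
  by (intro square_integrable_dominated[OF _ integrable_unit_measure_fst[OF square_integrable_score_envelope]]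
      AE_abs_centered_score_le borel_measurable_centered_score borel_measurable_propensity)

lemma integral_centered_score:
  assumes p: "p \<in> propensities" and \<epsilon>: "\<epsilon> \<in> propensities" and [measurable]: "\<phi> \<in> borel_measurable borel"
    and int: "integrable (unit_measure P) (\<lambda>u. \<phi> (centered_score p \<epsilon> u))"
  shows "(\<integral>u. \<phi> (centered_score p \<epsilon> u) \<partial>unit_measure P)
       = (\<integral>w. p (Xof w) * \<phi> (treated_score \<epsilon> w) + (1 - p (Xof w)) * \<phi> (control_score \<epsilon> w) \<partial>P)"
proof -
  have [measurable]: "p \<in> borel_measurable borel" "\<epsilon> \<in> borel_measurable borel"
    using p \<epsilon> by (simp_all add: borel_measurable_propensity)
  have split: "\<phi> (centered_score p \<epsilon> u) = (if snd u \<le> p (Xof (fst u))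
      then \<phi> (treated_score \<epsilon> (fst u)) else \<phi> (control_score \<epsilon> (fst u)))" for u
    using centered_score_split[of p \<epsilon> "fst u" "snd u"] by simp
  have "AE w in P. 0 \<le> p (Xof w) \<and> p (Xof w) \<le> 1"
    using AE_Xof_in by eventually_elim (simp add: propensities_bounds[OF p])
  then show ?thesis
    using int unfolding split
    by (intro integral_unit_measure_threshold prob_space_imp_sigma_finite prob_space_P) measurable
qed

lemma integral_cate_dev:
  shows "integrable P (\<lambda>w. cate_dev (Xof w))" and "(\<integral>w. cate_dev (Xof w) \<partial>P) = 0"
proof -
  note m0 = integral_m0[of 0] integral_m0[of 1]
  show "integrable P (\<lambda>w. cate_dev (Xof w))" using m0 by (simp add: cate_dev_def)
  show "(\<integral>w. cate_dev (Xof w) \<partial>P) = 0"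
    using m0 integrable_Ypot[of 0] integrable_Ypot[of 1] by (simp add: cate_dev_def ate_def prob_space)
qed

lemma borel_measurable_propensity_ratios:
  assumes "p \<in> propensities" "\<epsilon> \<in> propensities"
  shows "(\<lambda>x. p x / \<epsilon> x) \<in> borel_measurable borel"
    and "(\<lambda>x. (1 - p x) / (1 - \<epsilon> x)) \<in> borel_measurable borel"
    and "(\<lambda>x. p x / (\<epsilon> x)\<^sup>2) \<in> borel_measurable borel"
    and "(\<lambda>x. (1 - p x) / (1 - \<epsilon> x)\<^sup>2) \<in> borel_measurable borel"
proof -
  have [measurable]: "p \<in> borel_measurable borel" "\<epsilon> \<in> borel_measurable borel"
    using assms by (simp_all add: borel_measurable_propensity)
  show "(\<lambda>x. p x / \<epsilon> x) \<in> borel_measurable borel" by measurable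
  show "(\<lambda>x. (1 - p x) / (1 - \<epsilon> x)) \<in> borel_measurable borel" by measurable
  show "(\<lambda>x. p x / (\<epsilon> x)\<^sup>2) \<in> borel_measurable borel" by measurable
  show "(\<lambda>x. (1 - p x) / (1 - \<epsilon> x)\<^sup>2) \<in> borel_measurable borel" by measurable
qed

lemma AE_abs_propensity_ratios_le:
  assumes p: "p \<in> propensities" and \<epsilon>: "\<epsilon> \<in> propensities"
  shows "AE w in P. \<bar>p (Xof w) / \<epsilon> (Xof w)\<bar> \<le> 1 / \<gamma>"
    and "AE w in P. \<bar>(1 - p (Xof w)) / (1 - \<epsilon> (Xof w))\<bar> \<le> 1 / \<gamma>"
    and "AE w in P. \<bar>p (Xof w) / (\<epsilon> (Xof w))\<^sup>2\<bar> \<le> 1 / \<gamma>\<^sup>2"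
    and "AE w in P. \<bar>(1 - p (Xof w)) / (1 - \<epsilon> (Xof w))\<^sup>2\<bar> \<le> 1 / \<gamma>\<^sup>2"
proof -
  have bounds: "\<bar>p x / \<epsilon> x\<bar> \<le> 1 / \<gamma> \<and> \<bar>(1 - p x) / (1 - \<epsilon> x)\<bar> \<le> 1 / \<gamma>
      \<and> \<bar>p x / (\<epsilon> x)\<^sup>2\<bar> \<le> 1 / \<gamma>\<^sup>2 \<and> \<bar>(1 - p x) / (1 - \<epsilon> x)\<^sup>2\<bar> \<le> 1 / \<gamma>\<^sup>2" if "x \<in> XX" for x
  proof -
    note p_x = propensities_bounds[OF p that] and \<epsilon>_x = propensities_bounds[OF \<epsilon> that]
    have "\<gamma>\<^sup>2 \<le> (\<epsilon> x)\<^sup>2" "\<gamma>\<^sup>2 \<le> (1 - \<epsilon> x)\<^sup>2" using \<epsilon>_x gamma_pos by (auto intro!: power_mono)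
    moreover have "0 < \<gamma>\<^sup>2" using gamma_pos by simp
    ultimately show ?thesis
      using p_x \<epsilon>_x gamma_pos by (intro conjI abs_divide_le_inverse) auto
  qed
  show "AE w in P. \<bar>p (Xof w) / \<epsilon> (Xof w)\<bar> \<le> 1 / \<gamma>"
    and "AE w in P. \<bar>(1 - p (Xof w)) / (1 - \<epsilon> (Xof w))\<bar> \<le> 1 / \<gamma>"
    and "AE w in P. \<bar>p (Xof w) / (\<epsilon> (Xof w))\<^sup>2\<bar> \<le> 1 / \<gamma>\<^sup>2"
    and "AE w in P. \<bar>(1 - p (Xof w)) / (1 - \<epsilon> (Xof w))\<^sup>2\<bar> \<le> 1 / \<gamma>\<^sup>2"
    using AE_Xof_in by (eventually_elim, use bounds in blast)+
qed

lemma integrable_centered_score: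
  assumes "p \<in> propensities" "\<epsilon> \<in> propensities"
  shows "integrable (unit_measure P) (centered_score p \<epsilon>)"
proof -
  interpret U: prob_space "unit_measure P" by (rule prob_space_unit_measure[OF prob_space_P])
  have [measurable]: "p \<in> borel_measurable borel" "\<epsilon> \<in> borel_measurable borel"
    using assms by (simp_all add: borel_measurable_propensity)
  show ?thesis
    by (rule U.square_integrable_imp_integrable[OF _ square_integrable_centered_score[OF assms]]) measurable
qed

lemma integral_centered_score_eq_0:
  assumes p: "p \<in> propensities" and \<epsilon>: "\<epsilon> \<in> propensities"
  shows "(\<integral>u. centered_score p \<epsilon> u \<partial>unit_measure P) = 0"
proof -
  note k = borel_measurable_propensity_ratios[OF p \<epsilon>]
  note ratio = AE_abs_propensity_ratios_le[OF p \<epsilon>]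
  have "integrable P (\<lambda>w. p (Xof w) / \<epsilon> (Xof w) * Ypot 1 w)"
    by (rule integrable_bounded_mult[OF integrable_Ypot[OF insertI2[OF singletonI]] _ ratio(1)])
      (use k(1) in measurable)
  note r1 = integral_mult_residual_eq_0[OF insertI2[OF singletonI] k(1) this]
  have "integrable P (\<lambda>w. (1 - p (Xof w)) / (1 - \<epsilon> (Xof w)) * Ypot 0 w)"
    by (rule integrable_bounded_mult[OF integrable_Ypot[OF insertI1] _ ratio(2)])
      (use k(2) in measurable)
  note r0 = integral_mult_residual_eq_0[OF insertI1 k(2) this]
  have "(\<integral>u. centered_score p \<epsilon> u \<partial>unit_measure P)
      = (\<integral>w. p (Xof w) * treated_score \<epsilon> w + (1 - p (Xof w)) * control_score \<epsilon> w \<partial>P)"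
    using integral_centered_score[OF p \<epsilon>, of "\<lambda>x. x"] integrable_centered_score[OF p \<epsilon>] by simp
  also have "\<dots> = (\<integral>w. cate_dev (Xof w) + (p (Xof w) / \<epsilon> (Xof w) * residual 1 w
                   - (1 - p (Xof w)) / (1 - \<epsilon> (Xof w)) * residual 0 w) \<partial>P)"
    by (simp only: treated_score_def control_score_def aipw_mean_expansion)
  also have "\<dots> = 0" using integral_cate_dev r1 r0 by simp
  finally show ?thesis .
qed

lemma integral_cate_dev_mult_residual_eq_0:
  assumes z: "z \<in> {0, 1}" and [measurable]: "k \<in> borel_measurable borel"
    and k: "AE w in P. \<bar>k (Xof w)\<bar> \<le> K"
  shows "integrable P (\<lambda>w. 2 * cate_dev (Xof w) * k (Xof w) * residual z w)"
    and "(\<integral>w. 2 * cate_dev (Xof w) * k (Xof w) * residual z w \<partial>P) = 0"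
proof -
  have "integrable P (\<lambda>w. cate_dev (Xof w) * Ypot z w)"
    by (rule integrable_mult_square_integrable[OF _ _ square_integrable_cate_dev
        square_integrable_Ypot[OF z]]) measurable
  then have "integrable P (\<lambda>w. k (Xof w) * (cate_dev (Xof w) * Ypot z w))"
    by (rule integrable_bounded_mult[OF _ _ k]) measurable
  then have "integrable P (\<lambda>w. 2 * (k (Xof w) * (cate_dev (Xof w) * Ypot z w)))"
    by (rule integrable_mult_right)
  then have int: "integrable P (\<lambda>w. (2 * cate_dev (Xof w) * k (Xof w)) * Ypot z w)"
    by (simp only: mult_ac)
  have "(\<lambda>x. 2 * cate_dev x * k x) \<in> borel_measurable borel" by measurable
  from integral_mult_residual_eq_0[OF z this int]
  show "integrable P (\<lambda>w. 2 * cate_dev (Xof w) * k (Xof w) * residual z w)"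
    and "(\<integral>w. 2 * cate_dev (Xof w) * k (Xof w) * residual z w \<partial>P) = 0" by simp_all
qed

definition cond_second_moment :: "('x \<Rightarrow> real) \<Rightarrow> ('x \<Rightarrow> real) \<Rightarrow> 'x \<times> real \<times> real \<Rightarrow> real" where
  "cond_second_moment p \<epsilon> w = (cate_dev (Xof w))\<^sup>2 + (p (Xof w) / (\<epsilon> (Xof w))\<^sup>2 * v0 1 (Xof w)
     + (1 - p (Xof w)) / (1 - \<epsilon> (Xof w))\<^sup>2 * v0 0 (Xof w))"

lemma integrable_cond_second_moment:
  assumes "p \<in> propensities" "\<epsilon> \<in> propensities"
  shows "integrable P (cond_second_moment p \<epsilon>)"
proof -
  note k = borel_measurable_propensity_ratios[OF assms]
  note ratio = AE_abs_propensity_ratios_le[OF assms]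
  show ?thesis
    using integral_mult_residual_square(2)[OF insertI2[OF singletonI] k(3) ratio(3)]
      integral_mult_residual_square(2)[OF insertI1 k(4) ratio(4)] square_integrable_cate_dev
    unfolding cond_second_moment_def by simp
qed

lemma integral_centered_score_square:
  assumes p: "p \<in> propensities" and \<epsilon>: "\<epsilon> \<in> propensities"
  shows "(\<integral>u. (centered_score p \<epsilon> u)\<^sup>2 \<partial>unit_measure P) = (\<integral>w. cond_second_moment p \<epsilon> w \<partial>P)"
proof -
  note k = borel_measurable_propensity_ratios[OF p \<epsilon>]
  note ratio = AE_abs_propensity_ratios_le[OF p \<epsilon>]
  note c1 = integral_cate_dev_mult_residual_eq_0[OF insertI2[OF singletonI] k(1) ratio(1)]
  note c0 = integral_cate_dev_mult_residual_eq_0[OF insertI1 k(2) ratio(2)]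
  note s1 = integral_mult_residual_square[OF insertI2[OF singletonI] k(3) ratio(3)]
  note s0 = integral_mult_residual_square[OF insertI1 k(4) ratio(4)]
  have "(\<integral>u. (centered_score p \<epsilon> u)\<^sup>2 \<partial>unit_measure P)
      = (\<integral>w. p (Xof w) * (treated_score \<epsilon> w)\<^sup>2 + (1 - p (Xof w)) * (control_score \<epsilon> w)\<^sup>2 \<partial>P)"
    using integral_centered_score[OF p \<epsilon>, of "\<lambda>x. x\<^sup>2"] square_integrable_centered_score[OF p \<epsilon>]
    by simp
  also have "\<dots> = (\<integral>w. (cate_dev (Xof w))\<^sup>2
      + (2 * cate_dev (Xof w) * (p (Xof w) / \<epsilon> (Xof w)) * residual 1 w
         - 2 * cate_dev (Xof w) * ((1 - p (Xof w)) / (1 - \<epsilon> (Xof w))) * residual 0 w)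
      + (p (Xof w) / (\<epsilon> (Xof w))\<^sup>2 * (residual 1 w)\<^sup>2
         + (1 - p (Xof w)) / (1 - \<epsilon> (Xof w))\<^sup>2 * (residual 0 w)\<^sup>2) \<partial>P)"
    by (simp only: treated_score_def control_score_def aipw_square_expansion)
  also have "\<dots> = (\<integral>w. (cate_dev (Xof w))\<^sup>2 \<partial>P)
      + ((\<integral>w. p (Xof w) / (\<epsilon> (Xof w))\<^sup>2 * v0 1 (Xof w) \<partial>P)
         + (\<integral>w. (1 - p (Xof w)) / (1 - \<epsilon> (Xof w))\<^sup>2 * v0 0 (Xof w) \<partial>P))"
    using c1 c0 s1 s0 square_integrable_cate_dev by simp
  also have "\<dots> = (\<integral>w. cond_second_moment p \<epsilon> w \<partial>P)"
    using s1 s0 square_integrable_cate_dev by (simp add: cond_second_moment_def)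
  finally show ?thesis .
qed

lemma sum_weighted_integral_centered_score_square:
  fixes e :: "nat \<Rightarrow> 'x \<Rightarrow> real" and w :: "nat \<Rightarrow> real"
  assumes e: "\<forall>t<T. e t \<in> propensities" and w: "\<forall>t<T. 0 \<le> w t" "(\<Sum>t<T. w t) = 1"
  defines "\<epsilon> \<equiv> \<lambda>x. \<Sum>t<T. w t * e t x"
  shows "(\<Sum>t<T. w t * (\<integral>u. (centered_score (e t) \<epsilon> u)\<^sup>2 \<partial>unit_measure P)) = aipw_variance \<epsilon>"
proof -
  have \<epsilon>: "\<epsilon> \<in> propensities" unfolding \<epsilon>_def by (rule convex_combination_in_propensities[OF e w])
  have "(\<Sum>t<T. w t * (\<integral>u. (centered_score (e t) \<epsilon> u)\<^sup>2 \<partial>unit_measure P))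
      = (\<Sum>t<T. \<integral>v. w t * cond_second_moment (e t) \<epsilon> v \<partial>P)"
    using e by (simp add: integral_centered_score_square[OF _ \<epsilon>])
  also have "\<dots> = (\<integral>v. (\<Sum>t<T. w t * cond_second_moment (e t) \<epsilon> v) \<partial>P)"
    using e by (simp add: integrable_cond_second_moment[OF _ \<epsilon>])
  also have "\<dots> = aipw_variance \<epsilon>"
    unfolding aipw_variance_def cond_second_moment_def \<epsilon>_def
    by (simp only: mixture_second_moment_identity[OF w(2)])
  finally show ?thesis .
qed

lemma AE_abs_aipw_variance_integrand_le:
  assumes "\<epsilon> \<in> propensities"
  shows "AE w in P. \<bar>v0 1 (Xof w) / \<epsilon> (Xof w) + v0 0 (Xof w) / (1 - \<epsilon> (Xof w)) + (cate_dev (Xof w))\<^sup>2\<bar>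
                      \<le> \<bar>v0 1 (Xof w)\<bar> / \<gamma> + \<bar>v0 0 (Xof w)\<bar> / \<gamma> + (cate_dev (Xof w))\<^sup>2"
  using AE_Xof_in
proof eventually_elim
  case (elim w)
  have "\<bar>v0 1 (Xof w) / \<epsilon> (Xof w)\<bar> \<le> \<bar>v0 1 (Xof w)\<bar> / \<gamma>"
    and "\<bar>v0 0 (Xof w) / (1 - \<epsilon> (Xof w))\<bar> \<le> \<bar>v0 0 (Xof w)\<bar> / \<gamma>"
    using propensities_bounds[OF assms elim] gamma_pos by (auto simp: abs_divide intro!: divide_left_mono)
  then show ?case by (smt (verit) zero_le_power2)
qed

lemma aipw_variance_tendsto:
  assumes ev: "eventually (\<lambda>n. \<epsilon> n \<in> propensities) sequentially" and \<epsilon>': "\<epsilon>' \<in> propensities"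
    and lim: "\<And>x. x \<in> XX \<Longrightarrow> (\<lambda>n. \<epsilon> n x) \<longlonglongrightarrow> \<epsilon>' x"
  shows "(\<lambda>n. aipw_variance (\<epsilon> n)) \<longlonglongrightarrow> aipw_variance \<epsilon>'"
proof -
  obtain n0 where n0: "\<And>n. n0 \<le> n \<Longrightarrow> \<epsilon> n \<in> propensities"
    using ev by (auto simp: eventually_sequentially)
  define V where "V \<epsilon> w = v0 1 (Xof w) / \<epsilon> (Xof w) + v0 0 (Xof w) / (1 - \<epsilon> (Xof w))
    + (cate_dev (Xof w))\<^sup>2" for \<epsilon> :: "'x \<Rightarrow> real" and w
  have V_measurable: "V \<epsilon> \<in> borel_measurable P" if "\<epsilon> \<in> propensities" for \<epsilon>
  proof -
    have [measurable]: "\<epsilon> \<in> borel_measurable borel" by (rule borel_measurable_propensity[OF that])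
    show ?thesis unfolding V_def by measurable
  qed
  have "(\<lambda>n. \<integral>w. V (\<epsilon> (n + n0)) w \<partial>P) \<longlonglongrightarrow> (\<integral>w. V \<epsilon>' w \<partial>P)"
  proof (rule integral_dominated_convergence)
    show "integrable P (\<lambda>w. \<bar>v0 1 (Xof w)\<bar> / \<gamma> + \<bar>v0 0 (Xof w)\<bar> / \<gamma> + (cate_dev (Xof w))\<^sup>2)"
      using integrable_v0[OF insertI1] integrable_v0[OF insertI2[OF singletonI]]
        square_integrable_cate_dev by simp
    show "AE w in P. norm (V (\<epsilon> (n + n0)) w)
        \<le> \<bar>v0 1 (Xof w)\<bar> / \<gamma> + \<bar>v0 0 (Xof w)\<bar> / \<gamma> + (cate_dev (Xof w))\<^sup>2" for n
      using AE_abs_aipw_variance_integrand_le[OF n0[of "n + n0"]] by (simp add: V_def)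
    show "AE w in P. (\<lambda>n. V (\<epsilon> (n + n0)) w) \<longlonglongrightarrow> V \<epsilon>' w"
      using AE_Xof_in
    proof eventually_elim
      case (elim w)
      then have "\<epsilon>' (Xof w) \<noteq> 0" "1 - \<epsilon>' (Xof w) \<noteq> 0"
        using propensities_bounds[OF \<epsilon>' elim] gamma_pos by auto
      then show ?case
        unfolding V_def using LIMSEQ_ignore_initial_segment[OF lim[OF elim], of n0]
        by (intro tendsto_intros) auto
    qed
  qed (use V_measurable \<epsilon>' n0 in auto)
  then show ?thesis
    unfolding aipw_variance_def V_def by (rule LIMSEQ_offset)
qed

lemma batch_mixture_in_propensities:
  fixes Nt :: "nat \<Rightarrow> nat" and e :: "nat \<Rightarrow> 'x \<Rightarrow> real"
  assumes "\<forall>t<T. e t \<in> propensities" "0 < (\<Sum>t<T. Nt t)"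
  shows "(\<lambda>x. \<Sum>t<T. real (Nt t) / real (\<Sum>s<T. Nt s) * e t x) \<in> propensities"
  by (rule convex_combination_in_propensities[OF assms(1) _ sum_batch_fractions[OF assms(2)]])
    (auto intro!: divide_nonneg_nonneg sum_nonneg)

lemma batch_average_integral_centered_score_square:
  fixes Nt :: "nat \<Rightarrow> nat" and e :: "nat \<Rightarrow> 'x \<Rightarrow> real"
  assumes "\<forall>t<T. e t \<in> propensities" "0 < (\<Sum>t<T. Nt t)"
  defines "\<epsilon> \<equiv> \<lambda>x. \<Sum>t<T. real (Nt t) / real (\<Sum>s<T. Nt s) * e t x"
  shows "(\<Sum>j\<in>batch_index T Nt. \<integral>u. (centered_score (e (fst j)) \<epsilon> u)\<^sup>2 \<partial>unit_measure P)
           / (\<Sum>t<T. Nt t) = aipw_variance \<epsilon>"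
proof -
  have "(\<Sum>j\<in>batch_index T Nt. \<integral>u. (centered_score (e (fst j)) \<epsilon> u)\<^sup>2 \<partial>unit_measure P) / (\<Sum>t<T. Nt t)
      = (\<Sum>t<T. real (Nt t) / real (\<Sum>s<T. Nt s) * (\<integral>u. (centered_score (e t) \<epsilon> u)\<^sup>2 \<partial>unit_measure P))"
    by (simp add: sum_batch_index_fst[where g = "\<lambda>t. \<integral>u. (centered_score (e t) \<epsilon> u)\<^sup>2 \<partial>unit_measure P"]
        sum_divide_distrib)
  also have "\<dots> = aipw_variance \<epsilon>"
    unfolding \<epsilon>_def using assms(1) sum_batch_fractions[OF assms(2)]
    by (intro sum_weighted_integral_centered_score_square) (auto intro!: divide_nonneg_nonneg sum_nonneg)
  finally show ?thesis .
qed

lemma borel_measurable_score_envelope[measurable]: "score_envelope \<in> borel_measurable P"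
  unfolding score_envelope_def by measurable

lemma sqrt_card_mult_aipw_mean_minus_ate:
  assumes "finite A"
  shows "sqrt (card A) * (1 / card A * (\<Sum>j\<in>A. s_aipw_b m0 \<epsilon> (Xof (fst (u j))) (Zobs (p j) (u j))
            (Yobs (p j) (u j))) - ate)
       = (\<Sum>j\<in>A. centered_score (p j) \<epsilon> (u j)) / sqrt (card A)"
  unfolding centered_score_def by (rule sqrt_card_mult_mean_minus[OF assms])

lemma weak_conv_batch_scores:
  fixes T :: nat and Nt :: "nat \<Rightarrow> nat \<Rightarrow> nat" and e \<epsilon> :: "nat \<Rightarrow> 'x \<Rightarrow> real"
  assumes N: "filterlim (\<lambda>n. card (batch_index T (Nt n))) at_top sequentially"
    and e: "\<forall>t<T. e t \<in> propensities"
    and \<epsilon>: "\<And>n. 0 < card (batch_index T (Nt n)) \<Longrightarrow> \<epsilon> n \<in> propensities"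
    and var: "(\<lambda>n. (\<Sum>j\<in>batch_index T (Nt n). \<integral>u. (centered_score (e (fst j)) (\<epsilon> n) u)\<^sup>2 \<partial>unit_measure P)
                / card (batch_index T (Nt n))) \<longlonglongrightarrow> V"
  shows "weak_conv_m
    (\<lambda>n. distr (PiM (batch_index T (Nt n)) (\<lambda>_. unit_measure P)) borel
       (\<lambda>\<omega>. (\<Sum>j\<in>batch_index T (Nt n). centered_score (e (fst j)) (\<epsilon> n) (\<omega> j))
              / sqrt (card (batch_index T (Nt n)))))
    (normal_measure 0 V)"
proof (rule clt_dominated_triangular_array[OF prob_space_unit_measure[OF prob_space_P] finite_batch_index N
      _ _ integrable_unit_measure_fst[OF square_integrable_score_envelope] _ _ var])
  have scores: "e (fst j) \<in> propensities" "\<epsilon> n \<in> propensities" if "j \<in> batch_index T (Nt n)" for n j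
    using that e \<epsilon>[of n] finite_batch_index[of T "Nt n"]
    by (auto simp: batch_index_def card_gt_0_iff)
  show "centered_score (e (fst j)) (\<epsilon> n) \<in> borel_measurable (unit_measure P)"
    if "j \<in> batch_index T (Nt n)" for n j
    using scores[OF that] by (intro borel_measurable_centered_score borel_measurable_propensity)
  show "AE u in unit_measure P. \<bar>centered_score (e (fst j)) (\<epsilon> n) u\<bar> \<le> score_envelope (fst u)"
    if "j \<in> batch_index T (Nt n)" for n j
    by (rule AE_abs_centered_score_le[OF scores(2)[OF that]])
  show "(\<integral>u. centered_score (e (fst j)) (\<epsilon> n) u \<partial>unit_measure P) = 0"
    if "j \<in> batch_index T (Nt n)" for n j
    using scores[OF that] by (rule integral_centered_score_eq_0)
qed measurable

theorem batch_aipw_clt: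
  fixes T :: nat and Nt :: "nat \<Rightarrow> nat \<Rightarrow> nat" and \<kappa> :: "nat \<Rightarrow> real" and e :: "nat \<Rightarrow> 'x \<Rightarrow> real"
  defines "N \<equiv> \<lambda>n. \<Sum>t<T. Nt n t"
  defines "e0N \<equiv> \<lambda>n x. \<Sum>t<T. real (Nt n t) / real (N n) * e t x"
  defines "e0 \<equiv> \<lambda>x. \<Sum>t<T. \<kappa> t * e t x"
  assumes N: "filterlim N at_top sequentially"
    and \<kappa>: "\<forall>t<T. (\<lambda>n. real (Nt n t) / real (N n)) \<longlonglongrightarrow> \<kappa> t"
    and e: "\<forall>t<T. e t \<in> propensities"
  shows "weak_conv_m
    (\<lambda>n. distr (PiM (batch_index T (Nt n)) (\<lambda>_. unit_measure P)) borel
       (\<lambda>\<omega>. (\<Sum>j\<in>batch_index T (Nt n). centered_score (e (fst j)) (e0N n) (\<omega> j)) / sqrt (N n)))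
    (normal_measure 0 (aipw_variance e0))"
proof -
  have card: "card (batch_index T (Nt n)) = N n" for n by (simp add: N_def card_batch_index)
  have e0N_eq: "e0N n = (\<lambda>x. \<Sum>t<T. real (Nt n t) / real (\<Sum>s<T. Nt n s) * e t x)" for n
    by (simp only: e0N_def N_def)
  have "eventually (\<lambda>n. 1 \<le> N n) sequentially" using N by (simp add: filterlim_at_top)
  then have N_pos: "eventually (\<lambda>n. 0 < N n) sequentially" by eventually_elim simp
  have e0N: "e0N n \<in> propensities" if "0 < N n" for n
    unfolding e0N_eq using that by (intro batch_mixture_in_propensities[OF e]) (simp add: N_def)
  have e0N_lim: "(\<lambda>n. e0N n x) \<longlonglongrightarrow> e0 x" for x
    unfolding e0N_def e0_def using \<kappa> by (intro tendsto_sum tendsto_mult_right) simp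
  have e0: "e0 \<in> propensities"
  proof (rule limit_in_propensities[OF eventually_mono[OF N_pos e0N] _ e0N_lim])
    show "e0 \<in> borel_measurable borel"
      unfolding e0_def using e
      by (intro borel_measurable_sum borel_measurable_times borel_measurable_const)
        (simp add: borel_measurable_propensity)
  qed
  have "(\<lambda>n. aipw_variance (e0N n)) \<longlonglongrightarrow> aipw_variance e0"
    by (rule aipw_variance_tendsto[OF eventually_mono[OF N_pos e0N] e0 e0N_lim])
  moreover have "eventually (\<lambda>n. aipw_variance (e0N n)
      = (\<Sum>j\<in>batch_index T (Nt n). \<integral>u. (centered_score (e (fst j)) (e0N n) u)\<^sup>2 \<partial>unit_measure P) / N n)
      sequentially"
    using N_pos
  proof eventually_elim
    case (elim n)
    then show ?case
      unfolding e0N_eq unfolding N_def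
      by (rule batch_average_integral_centered_score_square[OF e, symmetric])
  qed
  ultimately have var: "(\<lambda>n. (\<Sum>j\<in>batch_index T (Nt n).
      \<integral>u. (centered_score (e (fst j)) (e0N n) u)\<^sup>2 \<partial>unit_measure P) / N n) \<longlonglongrightarrow> aipw_variance e0"
    by (rule Lim_transform_eventually)
  show ?thesis
    by (rule weak_conv_batch_scores[where T = T and Nt = Nt and \<epsilon> = e0N, unfolded card, OF N e e0N var])
qed

end

theorem corollary1:
  fixes P :: "((real ^ 'd::finite) \<times> real \<times> real) measure"
    and XX :: "(real ^ 'd) set"
    and T :: nat
    and Nt :: "nat \<Rightarrow> nat \<Rightarrow> nat"
    and \<kappa> :: "nat \<Rightarrow> real"
    and e :: "nat \<Rightarrow> real ^ 'd \<Rightarrow> real"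
    and m0 v0 :: "nat \<Rightarrow> real ^ 'd \<Rightarrow> real"
    and C q \<gamma> :: real
  defines "N \<equiv> (\<lambda>n. \<Sum>t<T. Nt n t)"
  defines "e0N \<equiv> (\<lambda>n x. \<Sum>t<T. (real (Nt n t) / real (N n)) * e t x)"
  defines "e0 \<equiv> (\<lambda>x. \<Sum>t<T. \<kappa> t * e t x)"
  defines "\<theta>0 \<equiv> (\<integral>w. Ypot 1 w - Ypot 0 w \<partial>P)"
  defines "\<theta>hat \<equiv> (\<lambda>n (\<omega> :: nat \<times> nat \<Rightarrow> ((real ^ 'd) \<times> real \<times> real) \<times> real).
     (1 / real (N n)) * (\<Sum>(t, i) \<in> batch_index T (Nt n).
        s_aipw_b m0 (e0N n) (Xof (fst (\<omega> (t, i)))) (Zobs (e t) (\<omega> (t, i))) (Yobs (e t) (\<omega> (t, i)))))"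
  defines "V0 \<equiv> (\<integral>w. v0 1 (Xof w) / e0 (Xof w) + v0 0 (Xof w) / (1 - e0 (Xof w))
                   + (m0 1 (Xof w) - m0 0 (Xof w) - \<theta>0)\<^sup>2 \<partial>P)"
  assumes P_prob: "prob_space P"
    and P_sets: "sets P = sets borel"
    and XX_sets: "XX \<in> sets borel"
    and XX_supp: "AE w in P. Xof w \<in> XX"
    and T2: "T \<ge> 2"
    and N_lim: "filterlim N at_top sequentially"
    and kappa_range: "\<forall>t<T. 0 < \<kappa> t \<and> \<kappa> t < 1"
    and kappa_lim: "\<forall>t<T. (\<lambda>n. real (Nt n t) / real (N n)) \<longlonglongrightarrow> \<kappa> t"
    and q2: "q > 2"
    and moment: "\<forall>z\<in>{0,1}. integrable P (\<lambda>w. \<bar>Ypot z w\<bar> powr q)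
                    \<and> (\<integral>w. \<bar>Ypot z w\<bar> powr q \<partial>P) powr (1 / q) \<le> C"
    and cond2: "\<forall>z\<in>{0,1}. \<exists>h. cond_exp_version P Xof (\<lambda>w. (Ypot z w)\<^sup>2) h \<and> (\<forall>x\<in>XX. h x \<le> C)"
    and gamma_pos: "\<gamma> > 0"
    and e_meas: "\<forall>t<T. e t \<in> borel_measurable borel"
    and e_range: "\<forall>t<T. \<forall>x\<in>XX. \<gamma> \<le> e t x \<and> e t x \<le> 1 - \<gamma>"
    and m0_def: "\<forall>z\<in>{0,1}. cond_exp_version P Xof (Ypot z) (m0 z)"
    and v0_def: "\<forall>z\<in>{0,1}. cond_exp_version P Xof (\<lambda>w. (Ypot z w - m0 z (Xof w))\<^sup>2) (v0 z)"
  shows "weak_conv_m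
           (\<lambda>n. distr (PiM (batch_index T (Nt n)) (\<lambda>_. unit_measure P)) borel
                   (\<lambda>\<omega>. sqrt (real (N n)) * (\<theta>hat n \<omega> - \<theta>0)))
           (normal_measure 0 V0)"
proof -
  interpret prob_space P by (rule P_prob)
  have square_integrable: "integrable P (\<lambda>w. (Ypot z w)\<^sup>2)" if "z \<in> {0, 1}" for z
  proof (rule square_integrable_of_integrable_powr[where q = q])
    show "Ypot z \<in> borel_measurable P" using P_sets by (simp cong: measurable_cong_sets)
  qed (use moment that q2 in auto)
  interpret aipw_model P XX m0 v0 \<gamma>
    using P_prob P_sets XX_supp gamma_pos square_integrable m0_def v0_def by unfold_locales auto
  have ate: "ate = \<theta>0" by (simp add: ate_def \<theta>0_def)
  have e: "\<forall>t<T. e t \<in> propensities" using e_meas e_range by (simp add: propensities_def)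
  have statistic: "sqrt (real (N n)) * (\<theta>hat n \<omega> - \<theta>0)
      = (\<Sum>j\<in>batch_index T (Nt n). centered_score (e (fst j)) (e0N n) (\<omega> j)) / sqrt (N n)" for n \<omega>
    using sqrt_card_mult_aipw_mean_minus_ate[OF finite_batch_index,
        where p = "\<lambda>j. e (fst j)" and \<epsilon> = "e0N n" and u = \<omega>]
    by (simp add: \<theta>hat_def N_def card_batch_index split_def ate)
  have V0: "V0 = aipw_variance e0" by (simp add: V0_def aipw_variance_def cate_dev_def ate)
  show ?thesis
    unfolding statistic unfolding V0 N_def e0N_def e0_def
    by (rule batch_aipw_clt) (use N_lim kappa_lim e in \<open>simp_all add: N_def\<close>)
qed

end
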